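(* Let $\mathcal{F}$ be a clique tree forest in which every clique tree is valid and calibrated. Let $\mathcal{F}'$ be obtained from $\mathcal{F}$ by a finite sequence of the operations (O1)–(O4) described in the context, each applied to the current forest. Then every clique tree of $\mathcal{F}'$ is calibrated.
   Context: All variables are discrete with finite domains; $D_v$ denotes the domain of variable $v$. A clique tree (CT) is a tree whose nodes are cliques (sets of variables) $C_i$, each carrying a nonnegative clique belief $\beta(C_i)$ (a function of the states of the variables in $C_i$). Each edge $(C_i,C_j)$ carries a sepset $S_{i,j}=C_i\cap C_j$ and a nonnegative sepset belief $\mu(S_{i,j})$. A clique tree forest (CTF) is a disjoint collection of clique trees. A CT is valid if every sepset is nonempty and equals the intersection of its two endpoint cliques, and the running intersection property holds: for every variable $v$, the cliques containing $v$ form a connected subtree. A CT is calibrated if for every edge $(C_i,C_j)$ we have $\sum_{C_i\setminus S_{i,j}}\beta(C_i)=\mu(S_{i,j})=\sum_{C_j\setminus S_{i,j}}\beta(C_j)$. The normalization constant of a calibrated CT is $Z=\sum_{C}\beta(C)$, the sum of any one clique belief over all joint states of that clique's variables (for a calibrated tree this does not depend on the clique chosen). A clique $C$ is non-maximal if $C\subseteq C'$ for some neighbouring clique $C'$. The operations are: (O1) Restriction: replace a CT by a connected subtree of it (keeping the beliefs of the retained cliques and sepsets), or delete a CT entirely. (O2) Exact marginalization of a variable $v$: let $ST_v$ be the (connected) subtree of all cliques containing $v$. Replace $ST_v$ by a single clique $C_c=\big(\bigcup_{C\in ST_v}C\big)\setminus\{v\}$ with belief $\beta(C_c)=\sum_{D_v}\frac{\prod_{C\in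 ST_v}\beta(C)}{\prod_{S\in ST_v}\mu(S)}$, where the denominator ranges over the sepsets of edges inside $ST_v$. Every edge joining a clique of $ST_v$ to a clique $N$ outside $ST_v$ is replaced by an edge between $C_c$ and $N$, with the same sepset and sepset belief. (When $ST_v$ is a single clique this is just summing $v$ out of its belief.) (O3) Local marginalization of a variable $v$: choose a nonempty connected subtree $ST_r$ of the cliques containing $v$. Remove $v$ from every clique containing $v$ that is not in $ST_r$, and from every sepset that contains $v$ and is not an edge inside $ST_r$. Each modified clique $C'=C\setminus\{v\}$ gets belief $\beta(C')=\sum_{D_v}\beta(C)$. Each modified sepset $S'=S\setminus\{v\}$ gets belief $\mu(S')=\sum_{D_v}\mu(S)$. The operation is only allowed if no sepset becomes empty, so that the tree stays connected. (O4) Removal of a non-maximal clique: if $C\subseteq C'$ for a neighbour $C'$, delete $C$ and the edge $(C,C')$. Connect each other neighbour $N$ of $C$ to $C'$, with sepset $N\cap C'$ and sepset belief equal to the former belief $\mu(N\cap C)$. *)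

theory Defs
  imports Complex_Main "HOL-Library.FuncSet"
begin

text \<open>A clique tree forest is represented as one finite undirected graph whose
connected components are the clique trees.  Variables have type 'v, states type 's; the domain of
variable v is D v.  A joint state of a set of variables A is an element of
PiE A D (value undefined outside A).\<close>

record ('n, 'v, 's) ctf =
  nodes :: "'n set"
  edges :: "'n set set"
  clq   :: "'n \<Rightarrow> 'v set"
  bel   :: "'n \<Rightarrow> ('v \<Rightarrow> 's) \<Rightarrow> real"
  sep   :: "'n set \<Rightarrow> 'v set"
  sbel  :: "'n set \<Rightarrow> ('v \<Rightarrow> 's) \<Rightarrow> real"

definition merge :: "'v set \<Rightarrow> ('v \<Rightarrow> 's) \<Rightarrow> ('v \<Rightarrow> 's) \<Rightarrow> ('v \<Rightarrow> 's)" where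
  "merge S a b = (\<lambda>x. if x \<in> S then a x else b x)"

definition marg :: "('v \<Rightarrow> 's set) \<Rightarrow> 'v set \<Rightarrow> 'v set \<Rightarrow> (('v \<Rightarrow> 's) \<Rightarrow> real)
    \<Rightarrow> ('v \<Rightarrow> 's) \<Rightarrow> real" where
  "marg D C S f a = (\<Sum>b \<in> PiE (C - S) D. f (merge S a b))"

definition adj :: "'n set set \<Rightarrow> ('n \<times> 'n) set" where
  "adj E = {(i, j). {i, j} \<in> E}"

definition connected_in :: "'n set set \<Rightarrow> 'n set \<Rightarrow> bool" where
  "connected_in E K \<longleftrightarrow> K \<noteq> {} \<and>
     (\<forall>i\<in>K. \<forall>j\<in>K. (i, j) \<in> (adj {e \<in> E. e \<subseteq> K})\<^sup>*)"

definition trees :: "('n, 'v, 's) ctf \<Rightarrow> 'n set set" where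
  "trees F = (\<lambda>i. {j. (i, j) \<in> (adj (edges F))\<^sup>*}) ` nodes F"

definition ctf_wf :: "('v \<Rightarrow> 's set) \<Rightarrow> ('n, 'v, 's) ctf \<Rightarrow> bool" where
  "ctf_wf D F \<longleftrightarrow> finite (nodes F)
     \<and> (\<forall>e \<in> edges F. card e = 2 \<and> e \<subseteq> nodes F)
     \<and> (\<forall>K \<in> trees F. card {e \<in> edges F. e \<subseteq> K} = card K - 1)
     \<and> (\<forall>i \<in> nodes F. finite (clq F i))
     \<and> (\<forall>i \<in> nodes F. \<forall>a \<in> PiE (clq F i) D. bel F i a \<ge> 0)
     \<and> (\<forall>e \<in> edges F. \<forall>a \<in> PiE (sep F e) D. sbel F e a \<ge> 0)"

definition valid_tree :: "('n, 'v, 's) ctf \<Rightarrow> 'n set \<Rightarrow> bool" where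
  "valid_tree F K \<longleftrightarrow>
     (\<forall>i j. {i, j} \<in> edges F \<and> i \<in> K \<longrightarrow>
        sep F {i, j} \<noteq> {} \<and> sep F {i, j} = clq F i \<inter> clq F j)
     \<and> (\<forall>v. {i \<in> K. v \<in> clq F i} \<noteq> {} \<longrightarrow> connected_in (edges F) {i \<in> K. v \<in> clq F i})"

definition calibrated :: "('v \<Rightarrow> 's set) \<Rightarrow> ('n, 'v, 's) ctf \<Rightarrow> 'n set \<Rightarrow> bool" where
  "calibrated D F K \<longleftrightarrow>
     (\<forall>i j. {i, j} \<in> edges F \<and> i \<in> K \<longrightarrow>
        (\<forall>a \<in> PiE (sep F {i, j}) D.
           marg D (clq F i) (sep F {i, j}) (bel F i) a = sbel F {i, j} a
         \<and> marg D (clq F j) (sep F {i, j}) (bel F j) a = sbel F {i, j} a))"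

text \<open>(O1) Restriction of clique tree K to a connected subtree T (T = {} : deletion).\<close>
definition op_restrict :: "('n, 'v, 's) ctf \<Rightarrow> ('n, 'v, 's) ctf \<Rightarrow> bool" where
  "op_restrict F F' \<longleftrightarrow> (\<exists>K \<in> trees F. \<exists>T. T \<subseteq> K \<and> (T = {} \<or> connected_in (edges F) T) \<and>
      F' = F\<lparr> nodes := nodes F - (K - T),
              edges := {e \<in> edges F. e \<subseteq> nodes F - (K - T)} \<rparr>)"

text \<open>(O2) Exact marginalization of v in clique tree K; c is the fresh node for C_c.\<close>
definition op_exact :: "('v \<Rightarrow> 's set) \<Rightarrow> ('n, 'v, 's) ctf \<Rightarrow> ('n, 'v, 's) ctf \<Rightarrow> bool" where
  "op_exact D F F' \<longleftrightarrow> (\<exists>K \<in> trees F. \<exists>v c.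
     let ST = {i \<in> K. v \<in> clq F i};
         ES = {e \<in> edges F. e \<subseteq> ST};
         U = \<Union> (clq F ` ST);
         g = (\<lambda>x. (\<Prod>i \<in> ST. bel F i (restrict x (clq F i))) /
                  (\<Prod>e \<in> ES. sbel F e (restrict x (sep F e))))
     in connected_in (edges F) ST \<and> c \<notin> nodes F
        \<and> nodes F' = (nodes F - ST) \<union> {c}
        \<and> edges F' = {e \<in> edges F. e \<inter> ST = {}}
                      \<union> {{c, n} | i n. {i, n} \<in> edges F \<and> i \<in> ST \<and> n \<notin> ST}
        \<and> (\<forall>i \<in> nodes F - ST. clq F' i = clq F i \<and> bel F' i = bel F i)
        \<and> clq F' c = U - {v}
        \<and> bel F' c = marg D U (U - {v}) g
        \<and> (\<forall>e \<in> edges F. e \<inter> ST = {} \<longrightarrow> sep F' e = sep F e \<and> sbel F' e = sbel F e)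
        \<and> (\<forall>i n. {i, n} \<in> edges F \<and> i \<in> ST \<and> n \<notin> ST \<longrightarrow>
              sep F' {c, n} = sep F {i, n} \<and> sbel F' {c, n} = sbel F {i, n}))"

text \<open>(O3) Local marginalization of v in clique tree K, keeping v in subtree R.\<close>
definition op_local :: "('v \<Rightarrow> 's set) \<Rightarrow> ('n, 'v, 's) ctf \<Rightarrow> ('n, 'v, 's) ctf \<Rightarrow> bool" where
  "op_local D F F' \<longleftrightarrow> (\<exists>K \<in> trees F. \<exists>v R.
     let CV = {i \<in> K. v \<in> clq F i};
         ME = {e \<in> edges F. e \<subseteq> K \<and> v \<in> sep F e \<and> \<not> e \<subseteq> R}
     in R \<subseteq> CV \<and> connected_in (edges F) R
        \<and> (\<forall>e \<in> ME. sep F e - {v} \<noteq> {})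
        \<and> nodes F' = nodes F \<and> edges F' = edges F
        \<and> (\<forall>i \<in> nodes F. if i \<in> CV - R
              then clq F' i = clq F i - {v} \<and> bel F' i = marg D (clq F i) (clq F i - {v}) (bel F i)
              else clq F' i = clq F i \<and> bel F' i = bel F i)
        \<and> (\<forall>e \<in> edges F. if e \<in> ME
              then sep F' e = sep F e - {v} \<and> sbel F' e = marg D (sep F e) (sep F e - {v}) (sbel F e)
              else sep F' e = sep F e \<and> sbel F' e = sbel F e))"

text \<open>(O4) Removal of a non-maximal clique C with C \<subseteq> C' for the neighbour C'.\<close>
definition op_remove :: "('n, 'v, 's) ctf \<Rightarrow> ('n, 'v, 's) ctf \<Rightarrow> bool" where
  "op_remove F F' \<longleftrightarrow> (\<exists>C C'. {C, C'} \<in> edges F \<and> C \<noteq> C' \<and> clq F C \<subseteq> clq F C'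
        \<and> nodes F' = nodes F - {C}
        \<and> edges F' = {e \<in> edges F. C \<notin> e} \<union> {{n, C'} | n. {n, C} \<in> edges F \<and> n \<noteq> C'}
        \<and> (\<forall>i \<in> nodes F - {C}. clq F' i = clq F i \<and> bel F' i = bel F i)
        \<and> (\<forall>e \<in> edges F. C \<notin> e \<longrightarrow> sep F' e = sep F e \<and> sbel F' e = sbel F e)
        \<and> (\<forall>n. {n, C} \<in> edges F \<and> n \<noteq> C' \<longrightarrow>
              sep F' {n, C'} = clq F n \<inter> clq F C' \<and> sbel F' {n, C'} = sbel F {n, C}))"

definition ctf_step :: "('v \<Rightarrow> 's set) \<Rightarrow> ('n, 'v, 's) ctf \<Rightarrow> ('n, 'v, 's) ctf \<Rightarrow> bool" where
  "ctf_step D F F' \<longleftrightarrow> op_restrict F F' \<or> op_exact D F F' \<or> op_local D F F' \<or> op_remove F F'"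

end

theory Submission
  imports Defs
begin

text \<open>The operations preserve a stronger invariant than calibration: the graph stays a forest, every
  separator is the intersection of its two cliques, beliefs stay nonnegative, every edge is
  calibrated and the running intersection property holds. Restriction (O1) only deletes parts of
  the forest, and local marginalization (O3) marginalizes cliques and separators consistently,
  which keeps them calibrated because marginals compose. Exact marginalization (O2) and removal of a
  non-maximal clique (O4) both contract a connected set of cliques into one clique. Its belief is
  calibrated with the outside because the joint belief of a calibrated subtree, the product of its
  clique beliefs divided by its separator beliefs, has the clique beliefs as marginals; this is
  proved by splitting the subtree at an edge, where the running intersection property makes the
  separator the only shared variables of the two halves.\<close>

section \<open>Marginals\<close>

lemma merge_in_PiE:
  assumes "a \<in> PiE S D" "b \<in> PiE T D"
  shows "merge S a b \<in> PiE (S \<union> T) D"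
  using assms unfolding merge_def PiE_def extensional_def Pi_def by auto

lemma restrict_in_PiE: "x \<in> PiE A D \<Longrightarrow> B \<subseteq> A \<Longrightarrow> restrict x B \<in> PiE B D"
  by auto

lemma merge_in_PiE_Diff:
  assumes "a \<in> PiE S D" "b \<in> PiE (A - S) D" "S \<subseteq> A"
  shows "merge S a b \<in> PiE A D"
  using merge_in_PiE[OF assms(1,2)] assms(3) by (simp add: Un_absorb1 Un_Diff_cancel)

lemma merge_restrict:
  assumes "x \<in> PiE A D"
  shows "merge S (restrict x S) (restrict x (A - S)) = x"
  using assms by (auto simp: merge_def PiE_def extensional_def)

lemma restrict_merge_left: "a \<in> PiE A D \<Longrightarrow> restrict (merge A a b) A = a"
  by (auto simp: merge_def fun_eq_iff PiE_def extensional_def)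

lemma restrict_merge_right: "A \<inter> B = {} \<Longrightarrow> b \<in> PiE B D \<Longrightarrow> restrict (merge A a b) B = b"
  by (auto simp: merge_def fun_eq_iff PiE_def extensional_def)

lemma bij_betw_merge:
  assumes "A \<inter> B = {}"
  shows "bij_betw (\<lambda>(a, b). merge A a b) (PiE A D \<times> PiE B D) (PiE (A \<union> B) D)"
proof (rule bij_betw_byWitness[where f' = "\<lambda>x. (restrict x A, restrict x B)"])
  show "\<forall>p \<in> PiE A D \<times> PiE B D.
      (restrict ((\<lambda>(a, b). merge A a b) p) A, restrict ((\<lambda>(a, b). merge A a b) p) B) = p"
  proof
    fix p assume "p \<in> PiE A D \<times> PiE B D"
    then obtain a b where "p = (a, b)" "a \<in> PiE A D" "b \<in> PiE B D" by blast
    then show "(restrict ((\<lambda>(a, b). merge A a b) p) A, restrict ((\<lambda>(a, b). merge A a b) p) B) = p"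
      using restrict_merge_left[of a A D b] restrict_merge_right[OF assms, of b D a] by simp
  qed
  have "(A \<union> B) - A = B" using assms by blast
  then show "\<forall>x \<in> PiE (A \<union> B) D. (\<lambda>(a, b). merge A a b) (restrict x A, restrict x B) = x"
    using merge_restrict[of _ "A \<union> B" D A] by simp
  show "(\<lambda>(a, b). merge A a b) ` (PiE A D \<times> PiE B D) \<subseteq> PiE (A \<union> B) D"
  proof (rule image_subsetI)
    fix p assume "p \<in> PiE A D \<times> PiE B D"
    then obtain a b where "p = (a, b)" "a \<in> PiE A D" "b \<in> PiE B D" by blast
    then show "(\<lambda>(a, b). merge A a b) p \<in> PiE (A \<union> B) D" using merge_in_PiE[of a A D b B] by simp
  qed
qed auto

lemma sum_PiE_Un:
  assumes "A \<inter> B = {}"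
  shows "(\<Sum>x \<in> PiE (A \<union> B) D. h x) = (\<Sum>a \<in> PiE A D. \<Sum>b \<in> PiE B D. h (merge A a b))"
  using sum.reindex_bij_betw[OF bij_betw_merge[OF assms], of h D]
  by (simp add: sum.cartesian_product case_prod_beta')

lemma marg_marg:
  assumes "S \<subseteq> A" "A \<subseteq> B"
  shows "marg D A S (marg D B A f) a = marg D B S f a"
proof -
  have B: "B - S = (A - S) \<union> (B - A)" "(A - S) \<inter> (B - A) = {}" using assms by auto
  have "merge S a (merge (A - S) b b') = merge A (merge S a b) b'" for b b'
    using assms by (auto simp: merge_def intro!: ext)
  then show ?thesis
    unfolding marg_def B(1) sum_PiE_Un[OF B(2)] by simp
qed

lemma marg_cong:
  assumes "a \<in> PiE S D" "S \<subseteq> A" "\<And>x. x \<in> PiE A D \<Longrightarrow> h x = h' x"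
  shows "marg D A S h a = marg D A S h' a"
  unfolding marg_def using assms merge_in_PiE_Diff by (metis (no_types, lifting) sum.cong)

lemma marg_self:
  assumes "a \<in> PiE S D"
  shows "marg D S S h a = h a"
proof -
  have "merge S a (\<lambda>_. undefined) = a"
    using assms by (auto simp: merge_def PiE_def extensional_def)
  then show ?thesis unfolding marg_def by simp
qed

lemma marg_nonneg:
  assumes "a \<in> PiE S D" "S \<subseteq> A" "\<And>x. x \<in> PiE A D \<Longrightarrow> h x \<ge> 0"
  shows "marg D A S h a \<ge> 0"
  unfolding marg_def using assms merge_in_PiE_Diff by (metis sum_nonneg)

lemma marg_eq_0_imp_eq_0:
  assumes "\<forall>v. finite (D v)" "finite A" "T \<subseteq> A" "x \<in> PiE A D"
    and "\<And>y. y \<in> PiE A D \<Longrightarrow> h y \<ge> 0" and "marg D A T h (restrict x T) = 0"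
  shows "h x = 0"
proof -
  let ?t = "restrict x T"
  have t: "?t \<in> PiE T D" using assms(3,4) by auto
  have "finite (PiE (A - T) D)" using assms(1,2) by (simp add: finite_PiE)
  moreover have "\<forall>b \<in> PiE (A - T) D. h (merge T ?t b) \<ge> 0"
    using assms(3,5) merge_in_PiE_Diff[OF t] by blast
  ultimately have "\<forall>b \<in> PiE (A - T) D. h (merge T ?t b) = 0"
    using assms(6) unfolding marg_def by (simp add: sum_nonneg_eq_0_iff)
  moreover have "restrict x (A - T) \<in> PiE (A - T) D" using assms(4) by auto
  ultimately show ?thesis using merge_restrict[OF assms(4)] by metis
qed

text \<open>Dividing out the separator belief \<open>g\<close> is harmless where \<open>g\<close> vanishes, since \<open>f1\<close> vanishes
  there too.\<close>
lemma marg_glue: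
  assumes fin: "\<forall>v. finite (D v)" "finite U1"
    and C: "C \<subseteq> U1" and T: "U1 \<inter> U2 = T"
    and nonneg: "\<And>x. x \<in> PiE U1 D \<Longrightarrow> f1 x \<ge> 0"
    and m1: "\<And>t. t \<in> PiE T D \<Longrightarrow> marg D U1 T f1 t = g t"
    and m2: "\<And>t. t \<in> PiE T D \<Longrightarrow> marg D U2 T f2 t = g t"
    and a: "a \<in> PiE C D"
  shows "marg D (U1 \<union> U2) C (\<lambda>x. f1 (restrict x U1) * f2 (restrict x U2) / g (restrict x T)) a
       = marg D U1 C f1 a"
proof -
  have split: "U1 \<union> U2 - C = (U1 - C) \<union> (U2 - U1)" "(U1 - C) \<inter> (U2 - U1) = {}"
    using C by auto
  have inner: "(\<Sum>z \<in> PiE (U2 - U1) D. f1 (restrict (merge C a (merge (U1 - C) y z)) U1)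
                  * f2 (restrict (merge C a (merge (U1 - C) y z)) U2)
                  / g (restrict (merge C a (merge (U1 - C) y z)) T))
             = f1 (merge C a y)" if y: "y \<in> PiE (U1 - C) D" for y
  proof -
    let ?y = "merge C a y"
    let ?t = "restrict ?y T"
    have y1: "?y \<in> PiE U1 D" using merge_in_PiE_Diff[OF a y C] .
    have t: "?t \<in> PiE T D" using y1 T by auto
    have "restrict (merge C a (merge (U1 - C) y z)) U1 = ?y"
         "restrict (merge C a (merge (U1 - C) y z)) U2 = merge T ?t z"
         "restrict (merge C a (merge (U1 - C) y z)) T = ?t"
      if "z \<in> PiE (U2 - U1) D" for z
      using y1 that C T by (fastforce simp: merge_def PiE_def extensional_def)+
    moreover have "U2 - U1 = U2 - T" using T by blast
    ultimately have "(\<Sum>z \<in> PiE (U2 - U1) D. f1 (restrict (merge C a (merge (U1 - C) y z)) U1)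
                  * f2 (restrict (merge C a (merge (U1 - C) y z)) U2)
                  / g (restrict (merge C a (merge (U1 - C) y z)) T))
             = f1 ?y * marg D U2 T f2 ?t / g ?t"
      unfolding marg_def by (simp add: sum_divide_distrib sum_distrib_left)
    also have "\<dots> = f1 ?y"
    proof (cases "g ?t = 0")
      case True
      moreover have "T \<subseteq> U1" using T by blast
      ultimately have "f1 ?y = 0"
        using marg_eq_0_imp_eq_0[OF fin _ y1, of T f1] nonneg m1[OF t] by simp
      then show ?thesis by simp
    qed (simp add: m2[OF t])
    finally show ?thesis .
  qed
  show ?thesis
    unfolding marg_def split(1) sum_PiE_Un[OF split(2)] using inner by simp
qed

section \<open>Cuts and connectivity\<close>

definition crosses :: "'n set \<Rightarrow> 'n set \<Rightarrow> bool" where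
  "crosses e X \<longleftrightarrow> e \<inter> X \<noteq> {} \<and> e - X \<noteq> {}"

definition cut_connected :: "'n set set \<Rightarrow> 'n set \<Rightarrow> bool" where
  "cut_connected E S \<longleftrightarrow>
     (\<forall>X. X \<inter> S \<noteq> {} \<longrightarrow> S - X \<noteq> {} \<longrightarrow> (\<exists>e \<in> E. e \<subseteq> S \<and> crosses e X))"

lemma crosses_doubleton: "crosses {x, y} X \<longleftrightarrow> (x \<in> X \<longleftrightarrow> y \<notin> X)"
  unfolding crosses_def by auto

lemma crosses_Compl: "crosses e (- X) \<longleftrightarrow> crosses e X"
  unfolding crosses_def by auto

lemma crosses_image: "crosses (h ` e) X \<longleftrightarrow> crosses e (h -` X)"
  unfolding crosses_def by auto

lemma crosses_cong: "(\<And>x. x \<in> e \<Longrightarrow> x \<in> X \<longleftrightarrow> x \<in> Y) \<Longrightarrow> crosses e X \<longleftrightarrow> crosses e Y"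
  unfolding crosses_def by blast

lemma crosses_card_2E:
  assumes "crosses e X" "card e = 2"
  obtains x y where "e = {x, y}" "x \<in> X" "y \<notin> X"
proof -
  obtain x y where xy: "x \<in> e" "x \<in> X" "y \<in> e" "y \<notin> X"
    using assms(1) unfolding crosses_def by blast
  obtain u v where "e = {u, v}" using assms(2) card_2_iff by metis
  with xy have "e = {x, y}" by blast
  with xy show thesis using that by blast
qed

lemma sym_adj: "sym (adj E)"
  unfolding adj_def sym_def by (auto simp: insert_commute)

lemma reach_sym: "(a, b) \<in> (adj E)\<^sup>* \<Longrightarrow> (b, a) \<in> (adj E)\<^sup>*"
  by (rule symD[OF sym_rtrancl[OF sym_adj]])

lemma edge_reach: "{x, y} \<in> E \<Longrightarrow> (x, y) \<in> (adj E)\<^sup>*"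
  unfolding adj_def by (simp add: r_into_rtrancl)

lemma reach_leaves:
  assumes "(a, b) \<in> (adj E)\<^sup>*" "a \<in> X" "b \<notin> X"
  shows "\<exists>x y. {x, y} \<in> E \<and> x \<in> X \<and> y \<notin> X"
  using assms
proof (induction rule: rtrancl_induct)
  case (step y z)
  then show ?case unfolding adj_def by (cases "y \<in> X") auto
qed simp

lemma reach_crosses:
  assumes "(a, b) \<in> (adj E)\<^sup>*" "a \<in> X" "b \<notin> X"
  shows "\<exists>e \<in> E. crosses e X"
proof -
  obtain x y where "{x, y} \<in> E" "x \<in> X" "y \<notin> X" using reach_leaves[OF assms] by blast
  then show ?thesis by (intro bexI[of _ "{x, y}"]) (simp_all add: crosses_doubleton)
qed

lemma reach_same_side:
  assumes "(a, b) \<in> (adj E)\<^sup>*" "\<forall>e \<in> E. \<not> crosses e X"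
  shows "a \<in> X \<longleftrightarrow> b \<in> X"
  using reach_crosses[OF assms(1)] reach_crosses[OF reach_sym[OF assms(1)]] assms(2) by blast

lemma reach_closed:
  assumes "(a, x) \<in> (adj E)\<^sup>*" "\<forall>e \<in> E. e \<subseteq> N" "a \<in> N"
  shows "x \<in> N"
  using assms(1)
proof (induction rule: rtrancl_induct)
  case (step y z)
  then show ?case using assms(2) unfolding adj_def by auto
qed (rule assms(3))

lemma reach_start:
  assumes "(a, b) \<in> (adj E)\<^sup>*" "a \<noteq> b" "\<forall>e \<in> E. e \<subseteq> N"
  shows "a \<in> N"
  using assms(1,2)
proof (cases rule: converse_rtranclE)
  case (step z)
  then show ?thesis using assms(3) unfolding adj_def by auto
qed simp

lemma reach_map:
  assumes "(a, b) \<in> (adj E')\<^sup>*" "\<And>x y. {x, y} \<in> E' \<Longrightarrow> (h x, h y) \<in> (adj E)\<^sup>*"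
  shows "(h a, h b) \<in> (adj E)\<^sup>*"
  using assms(1)
proof (induction rule: rtrancl_induct)
  case (step y z)
  then show ?case using assms(2) unfolding adj_def by (blast intro: rtrancl_trans)
qed simp

lemma connected_in_imp_cut_connected:
  assumes "connected_in E K"
  shows "cut_connected E K"
  unfolding cut_connected_def
proof (intro allI impI)
  fix X assume "X \<inter> K \<noteq> {}" "K - X \<noteq> {}"
  then obtain a b where "a \<in> X" "a \<in> K" "b \<in> K" "b \<notin> X" by auto
  then have "(a, b) \<in> (adj {e \<in> E. e \<subseteq> K})\<^sup>*" using assms unfolding connected_in_def by auto
  from reach_crosses[OF this \<open>a \<in> X\<close> \<open>b \<notin> X\<close>]
  show "\<exists>e \<in> E. e \<subseteq> K \<and> crosses e X" by blast
qed

lemma cut_connected_mono: "cut_connected E T \<Longrightarrow> E \<subseteq> E' \<Longrightarrow> cut_connected E' T"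
  unfolding cut_connected_def by blast

lemma cut_connected_component: "cut_connected E {x. (a, x) \<in> (adj E)\<^sup>*}"
  unfolding cut_connected_def
proof (intro allI impI)
  let ?C = "{x. (a, x) \<in> (adj E)\<^sup>*}"
  fix X assume "X \<inter> ?C \<noteq> {}" "?C - X \<noteq> {}"
  then obtain p q where p: "p \<in> X" "(a, p) \<in> (adj E)\<^sup>*" and q: "q \<notin> X" "(a, q) \<in> (adj E)\<^sup>*"
    by blast
  have pq: "(p, q) \<in> (adj E)\<^sup>*" using rtrancl_trans[OF reach_sym[OF p(2)] q(2)] .
  have "p \<in> X \<inter> ?C" "q \<notin> X \<inter> ?C" using p q by simp_all
  from reach_leaves[OF pq this]
  obtain x y where xy: "{x, y} \<in> E" "x \<in> X \<inter> ?C" "y \<notin> X \<inter> ?C" by blast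
  have "(x, y) \<in> adj E" using xy(1) unfolding adj_def by simp
  then have "(a, y) \<in> (adj E)\<^sup>*" using xy(2) by (blast intro: rtrancl_into_rtrancl)
  then have "{x, y} \<subseteq> ?C" "crosses {x, y} X" using xy by (simp_all add: crosses_doubleton)
  then show "\<exists>e \<in> E. e \<subseteq> ?C \<and> crosses e X" using xy(1) by blast
qed

lemma cut_connected_reach:
  assumes "cut_connected E T" "a \<in> T" "b \<in> T" "\<forall>e \<in> E. card e = 2"
  shows "(a, b) \<in> (adj E)\<^sup>*"
proof (rule ccontr)
  let ?C = "{x. (a, x) \<in> (adj E)\<^sup>*}"
  assume "(a, b) \<notin> (adj E)\<^sup>*"
  then have "a \<in> ?C \<inter> T" "b \<in> T - ?C" using assms(2,3) by simp_all
  then obtain e where e: "e \<in> E" "crosses e ?C"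
    using assms(1) unfolding cut_connected_def by (metis empty_iff)
  then obtain p q where "e = {p, q}" "p \<in> ?C" "q \<notin> ?C"
    using assms(4) by (metis crosses_card_2E)
  moreover have "(p, q) \<in> adj E" using e(1) calculation(1) unfolding adj_def by simp
  ultimately show False by (simp add: rtrancl_into_rtrancl)
qed

lemma cut_connected_side:
  assumes "cut_connected E S" "\<forall>e \<in> E. e \<subseteq> S \<longrightarrow> \<not> crosses e X"
  shows "S \<subseteq> X \<or> S \<inter> X = {}"
  using assms unfolding cut_connected_def by blast

lemma cut_connected_edge: "{x, y} \<in> E \<Longrightarrow> cut_connected E {x, y}"
  unfolding cut_connected_def crosses_def by blast

lemma cut_connected_Int:
  assumes "cut_connected E S" "{x, y} \<in> E" "{x, y} \<subseteq> S" "x \<in> X" "y \<notin> X"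
    and "\<forall>e \<in> E. e \<subseteq> S \<longrightarrow> crosses e X \<longrightarrow> e = {x, y}"
  shows "cut_connected E (S \<inter> X)"
  unfolding cut_connected_def
proof (intro allI impI)
  fix Y assume Y: "Y \<inter> (S \<inter> X) \<noteq> {}" "S \<inter> X - Y \<noteq> {}"
  define Y' where "Y' = (Y \<inter> X) \<union> (if x \<in> Y then - X else {})"
  have "Y' \<inter> S \<noteq> {}" "S - Y' \<noteq> {}" using Y unfolding Y'_def by auto
  then obtain e where e: "e \<in> E" "e \<subseteq> S" "crosses e Y'"
    using assms(1) unfolding cut_connected_def by blast
  have "e \<subseteq> X"
  proof (rule ccontr)
    assume "\<not> e \<subseteq> X"
    moreover have "e \<inter> X \<noteq> {}" using e(3) unfolding crosses_def Y'_def by (auto split: if_splits)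
    ultimately have "e = {x, y}" using assms(6) e unfolding crosses_def by blast
    then show False using e(3) assms(4,5) unfolding crosses_def Y'_def by (auto split: if_splits)
  qed
  then have "crosses e Y" using e(3) unfolding crosses_def Y'_def by (auto split: if_splits)
  then show "\<exists>e \<in> E. e \<subseteq> S \<inter> X \<and> crosses e Y" using e \<open>e \<subseteq> X\<close> by blast
qed

lemma reach_avoiding_edge:
  assumes "(a, x) \<in> (adj E)\<^sup>*" "(a, b) \<in> (adj (E - {{a, b}}))\<^sup>*"
  shows "(a, x) \<in> (adj (E - {{a, b}}))\<^sup>*"
  using assms(1)
proof (induction rule: rtrancl_induct)
  case (step y z)
  show ?case
  proof (cases "{y, z} = {a, b}")
    case True
    then have "z = a \<or> z = b" by (auto simp: doubleton_eq_iff)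
    then show ?thesis using assms(2) by auto
  next
    case False
    then have "(y, z) \<in> adj (E - {{a, b}})" using step(2) unfolding adj_def by simp
    with step(3) show ?thesis by (rule rtrancl_into_rtrancl)
  qed
qed simp

lemma reach_within:
  assumes "(a, x) \<in> (adj E)\<^sup>*" "a \<in> K" "\<And>y z. {y, z} \<in> E \<Longrightarrow> y \<in> K \<Longrightarrow> z \<in> K"
  shows "(a, x) \<in> (adj {e \<in> E. e \<subseteq> K})\<^sup>* \<and> x \<in> K"
  using assms(1)
proof (induction rule: rtrancl_induct)
  case (step y z)
  then have "{y, z} \<in> E" "y \<in> K" unfolding adj_def by simp_all
  moreover from calculation have "z \<in> K" by (rule assms(3))
  ultimately have "(y, z) \<in> adj {e \<in> E. e \<subseteq> K}" unfolding adj_def by simp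
  with step.IH \<open>z \<in> K\<close> show ?case by (blast intro: rtrancl_into_rtrancl)
qed (simp add: assms(2))

text \<open>Each node other than the root is mapped injectively to the edge towards a parent closer to
  the root.\<close>
lemma card_le_Suc_card_edges:
  assumes fin: "finite K" and EK: "\<forall>e \<in> EK. e \<subseteq> K" and r: "r \<in> K"
    and reach: "\<forall>x \<in> K. (r, x) \<in> (adj EK)\<^sup>*"
  shows "card K \<le> Suc (card EK)"
proof -
  define dist where "dist x = (LEAST n. (r, x) \<in> adj EK ^^ n)" for x
  have "\<exists>p. {p, x} \<in> EK \<and> dist p < dist x" if x: "x \<in> K - {r}" for x
  proof -
    have "\<exists>n. (r, x) \<in> adj EK ^^ n" using reach x by (simp add: rtrancl_power)
    then have d: "(r, x) \<in> adj EK ^^ dist x" unfolding dist_def by (rule LeastI_ex)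
    then obtain m where m: "dist x = Suc m" using x by (cases "dist x") auto
    then obtain p where "(r, p) \<in> adj EK ^^ m" "(p, x) \<in> adj EK" using d by auto
    moreover from calculation(1) have "dist p \<le> m" unfolding dist_def by (rule Least_le)
    ultimately show ?thesis using m unfolding adj_def by auto
  qed
  then obtain par where par: "\<And>x. x \<in> K - {r} \<Longrightarrow> {par x, x} \<in> EK \<and> dist (par x) < dist x"
    by metis
  have "inj_on (\<lambda>x. {par x, x}) (K - {r})"
  proof (rule inj_onI)
    fix x y assume x: "x \<in> K - {r}" and y: "y \<in> K - {r}" and eq: "{par x, x} = {par y, y}"
    show "x = y"
    proof (rule ccontr)
      assume "x \<noteq> y"
      then have "x = par y" "y = par x" using eq by (auto simp: doubleton_eq_iff)
      then show False using par[OF x] par[OF y] by simp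
    qed
  qed
  moreover have "(\<lambda>x. {par x, x}) ` (K - {r}) \<subseteq> EK" using par by blast
  moreover have "finite EK" using EK fin by (meson Sup_le_iff finite_UnionD finite_subset)
  ultimately have "card (K - {r}) \<le> card EK" by (rule card_inj_on_le)
  then show ?thesis using r fin by simp
qed

lemma component_in_trees: "a \<in> nodes F \<Longrightarrow> {j. (a, j) \<in> (adj (edges F))\<^sup>*} \<in> trees F"
  unfolding trees_def by blast

lemma tree_reach_closed:
  assumes "K \<in> trees F" "x \<in> K" "(x, y) \<in> (adj (edges F))\<^sup>*"
  shows "y \<in> K"
  using assms unfolding trees_def by (auto intro: rtrancl_trans)

lemma tree_edge_iff:
  assumes "K \<in> trees F" "{x, y} \<in> edges F"
  shows "x \<in> K \<longleftrightarrow> y \<in> K"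
  using tree_reach_closed[OF assms(1)] edge_reach[OF assms(2)] reach_sym[OF edge_reach[OF assms(2)]]
  by blast

section \<open>Junction forests\<close>

text \<open>For a subtree \<open>S\<close> this is the function \<open>g\<close> of (O2), whose marginal is the new clique belief.\<close>
definition joint_belief :: "('n, 'v, 's) ctf \<Rightarrow> 'n set \<Rightarrow> ('v \<Rightarrow> 's) \<Rightarrow> real" where
  "joint_belief F S x =
     (\<Prod>i \<in> S. bel F i (restrict x (clq F i))) / (\<Prod>e \<in> {e \<in> edges F. e \<subseteq> S}. sbel F e (restrict x (sep F e)))"

text \<open>The invariant preserved by (O1)--(O4). Every edge is a bridge, so the graph is a forest;
  calibration is required in both orientations of each edge \<open>{x, y}\<close>, and the running
  intersection property is phrased with cuts.\<close>
locale junction_forest =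
  fixes D :: "'v \<Rightarrow> 's set" and F :: "('n, 'v, 's) ctf"
  assumes finite_D: "finite (D v)"
    and finite_nodes: "finite (nodes F)"
    and card_edge: "e \<in> edges F \<Longrightarrow> card e = 2"
    and edge_subset_nodes: "e \<in> edges F \<Longrightarrow> e \<subseteq> nodes F"
    and edge_is_bridge: "e \<in> edges F \<Longrightarrow> \<exists>X. crosses e X \<and> (\<forall>f \<in> edges F. crosses f X \<longrightarrow> f = e)"
    and finite_clq: "i \<in> nodes F \<Longrightarrow> finite (clq F i)"
    and bel_nonneg: "i \<in> nodes F \<Longrightarrow> a \<in> PiE (clq F i) D \<Longrightarrow> 0 \<le> bel F i a"
    and sbel_nonneg: "e \<in> edges F \<Longrightarrow> a \<in> PiE (sep F e) D \<Longrightarrow> 0 \<le> sbel F e a"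
    and sep_eq: "{x, y} \<in> edges F \<Longrightarrow> sep F {x, y} = clq F x \<inter> clq F y"
    and marg_clq_sep: "{x, y} \<in> edges F \<Longrightarrow> a \<in> PiE (sep F {x, y}) D \<Longrightarrow>
        marg D (clq F x) (sep F {x, y}) (bel F x) a = sbel F {x, y} a"
    and running_intersection: "w \<in> clq F i \<Longrightarrow> w \<in> clq F j \<Longrightarrow> i \<in> X \<Longrightarrow> j \<notin> X \<Longrightarrow>
        (i, j) \<in> (adj (edges F))\<^sup>* \<Longrightarrow> \<exists>e \<in> edges F. crosses e X \<and> (\<forall>u \<in> e. w \<in> clq F u)"
begin

lemma edge_neq: "{x, y} \<in> edges F \<Longrightarrow> x \<noteq> y"
  using card_edge by fastforce

lemma edge_in_nodes: "{x, y} \<in> edges F \<Longrightarrow> x \<in> nodes F"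
  using edge_subset_nodes by blast

lemma edge_doubletonE:
  assumes "e \<in> edges F"
  obtains x y where "e = {x, y}" "x \<noteq> y"
  using card_edge[OF assms] by (meson card_2_iff)

lemma sep_subset_clq: "{x, y} \<in> edges F \<Longrightarrow> sep F {x, y} \<subseteq> clq F x"
  using sep_eq by blast

lemma bridge_cut:
  assumes "{p, q} \<in> edges F"
  shows "\<exists>Y. p \<in> Y \<and> q \<notin> Y \<and> (\<forall>g \<in> edges F. crosses g Y \<longrightarrow> g = {p, q})"
proof -
  obtain X where X: "crosses {p, q} X" "\<forall>g \<in> edges F. crosses g X \<longrightarrow> g = {p, q}"
    using edge_is_bridge[OF assms] by blast
  show ?thesis
  proof (cases "p \<in> X")
    case True
    then show ?thesis using X by (auto simp: crosses_doubleton)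
  next
    case False
    then show ?thesis using X by (intro exI[of _ "- X"]) (auto simp: crosses_doubleton crosses_Compl)
  qed
qed

lemma calibrated: "calibrated D F K"
  unfolding calibrated_def
proof (intro allI impI ballI conjI)
  fix i j a assume "{i, j} \<in> edges F \<and> i \<in> K" "a \<in> PiE (sep F {i, j}) D"
  then show "marg D (clq F i) (sep F {i, j}) (bel F i) a = sbel F {i, j} a"
    "marg D (clq F j) (sep F {i, j}) (bel F j) a = sbel F {i, j} a"
    using marg_clq_sep[of i j a] marg_clq_sep[of j i a] by (simp_all add: insert_commute)
qed

lemma joint_belief_split:
  assumes "finite S" "f \<in> edges F" "f \<subseteq> S" "crosses f X" "\<forall>g \<in> edges F. crosses g X \<longrightarrow> g = f"
  shows "joint_belief F S x =
           joint_belief F (S \<inter> X) x * joint_belief F (S - X) x / sbel F f (restrict x (sep F f))"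
proof -
  let ?E = "\<lambda>S. {e \<in> edges F. e \<subseteq> S}"
  have ES: "?E S = insert f (?E (S \<inter> X) \<union> ?E (S - X))"
    using assms(2-5) unfolding crosses_def by blast
  have f: "f \<notin> ?E (S \<inter> X) \<union> ?E (S - X)" using assms(4) unfolding crosses_def by blast
  have "finite (?E S)" using assms(1) by (auto intro: finite_subset[of _ "Pow S"])
  then have fin: "finite (?E (S \<inter> X))" "finite (?E (S - X))" unfolding ES by simp_all
  have "e \<noteq> {}" if "e \<in> edges F" for e using card_edge[OF that] by auto
  then have disj: "?E (S \<inter> X) \<inter> ?E (S - X) = {}" by blast
  let ?b = "\<lambda>e. sbel F e (restrict x (sep F e))" and ?c = "\<lambda>i. bel F i (restrict x (clq F i))"
  have "(\<Prod>e \<in> ?E S. ?b e) = ?b f * ((\<Prod>e \<in> ?E (S \<inter> X). ?b e) * (\<Prod>e \<in> ?E (S - X). ?b e))"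
    unfolding ES using f fin disj by (simp add: prod.union_disjoint)
  moreover have "(\<Prod>i \<in> S. ?c i) = (\<Prod>i \<in> S \<inter> X. ?c i) * (\<Prod>i \<in> S - X. ?c i)"
    using assms(1) prod.union_disjoint[of "S \<inter> X" "S - X" ?c] by (simp add: Int_Diff_Un Int_Diff_disjoint)
  ultimately show ?thesis
    unfolding joint_belief_def by (simp add: divide_inverse inverse_mult_distrib ac_simps)
qed

lemma sep_subset_Union_clq:
  assumes "e \<in> edges F" "e \<subseteq> S"
  shows "sep F e \<subseteq> \<Union> (clq F ` S)"
proof -
  obtain x y where "e = {x, y}" using edge_doubletonE[OF assms(1)] by metis
  then show ?thesis using sep_eq assms by auto
qed

lemma joint_belief_restrict:
  assumes "\<Union> (clq F ` S) \<subseteq> U"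
  shows "joint_belief F S (restrict x U) = joint_belief F S x"
proof -
  have "restrict (restrict x U) (clq F i) = restrict x (clq F i)" if "i \<in> S" for i
    using assms that by (intro restrict_ext) auto
  moreover have "restrict (restrict x U) (sep F e) = restrict x (sep F e)"
    if "e \<in> edges F" "e \<subseteq> S" for e
    using sep_subset_Union_clq[OF that] assms by (intro restrict_ext) auto
  ultimately show ?thesis unfolding joint_belief_def by simp
qed

lemma joint_belief_nonneg:
  assumes "S \<subseteq> nodes F" "x \<in> PiE (\<Union> (clq F ` S)) D"
  shows "0 \<le> joint_belief F S x"
proof -
  have "0 \<le> bel F i (restrict x (clq F i))" if "i \<in> S" for i
    using bel_nonneg[of i] restrict_in_PiE[OF assms(2)] assms(1) that by blast
  moreover have "0 \<le> sbel F e (restrict x (sep F e))" if "e \<in> edges F" "e \<subseteq> S" for e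
    using sbel_nonneg[OF that(1)] restrict_in_PiE[OF assms(2) sep_subset_Union_clq[OF that]] .
  ultimately show ?thesis
    unfolding joint_belief_def by (intro divide_nonneg_nonneg prod_nonneg) auto
qed

lemma marg_sep_if_marg_clq:
  assumes "{x, y} \<in> edges F" "clq F x \<subseteq> U"
    and "\<And>b. b \<in> PiE (clq F x) D \<Longrightarrow> marg D U (clq F x) f b = bel F x b"
    and "t \<in> PiE (sep F {x, y}) D"
  shows "marg D U (sep F {x, y}) f t = sbel F {x, y} t"
proof -
  have sub: "sep F {x, y} \<subseteq> clq F x" using sep_subset_clq[OF assms(1)] .
  have "marg D U (sep F {x, y}) f t = marg D (clq F x) (sep F {x, y}) (marg D U (clq F x) f) t"
    by (rule marg_marg[OF sub assms(2), symmetric])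
  also have "\<dots> = marg D (clq F x) (sep F {x, y}) (bel F x) t"
    using marg_cong[OF assms(4) sub] assms(3) by blast
  finally show ?thesis using marg_clq_sep[OF assms(1,4)] by simp
qed

lemma cut_connected_split:
  assumes S: "cut_connected (edges F) S" "i \<in> S" "S \<noteq> {i}"
  obtains x y X where "{x, y} \<in> edges F" "x \<in> S \<inter> X" "y \<in> S - X" "i \<in> X"
    "\<forall>g \<in> edges F. crosses g X \<longrightarrow> g = {x, y}"
    "cut_connected (edges F) (S \<inter> X)" "cut_connected (edges F) (S - X)"
proof -
  have "{i} \<inter> S \<noteq> {}" "S - {i} \<noteq> {}" using S(2,3) by auto
  then obtain f where f: "f \<in> edges F" "f \<subseteq> S" using S(1) unfolding cut_connected_def by blast
  obtain X0 where X0: "crosses f X0" "\<forall>g \<in> edges F. crosses g X0 \<longrightarrow> g = f"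
    using edge_is_bridge[OF f(1)] by blast
  define X where "X = (if i \<in> X0 then X0 else - X0)"
  have X: "i \<in> X" "crosses f X" "\<forall>g \<in> edges F. crosses g X \<longrightarrow> g = f"
    using X0 unfolding X_def by (auto simp: crosses_Compl)
  obtain x y where xy: "f = {x, y}" "x \<in> X" "y \<notin> X"
    using crosses_card_2E[OF X(2) card_edge[OF f(1)]] by blast
  have fS: "{x, y} \<subseteq> S" "{y, x} \<subseteq> S" using f(2) xy(1) by auto
  have f': "{y, x} \<in> edges F" using f(1) xy(1) by (simp add: insert_commute)
  have uniq: "\<forall>g \<in> edges F. g \<subseteq> S \<longrightarrow> crosses g X \<longrightarrow> g = {x, y}"
    "\<forall>g \<in> edges F. g \<subseteq> S \<longrightarrow> crosses g (- X) \<longrightarrow> g = {y, x}"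
    using X(3) xy(1) by (auto simp: crosses_Compl insert_commute)
  have "y \<in> - X" "x \<notin> - X" using xy(2,3) by simp_all
  from cut_connected_Int[OF S(1) f' fS(2) this uniq(2)]
  have "cut_connected (edges F) (S - X)" by (simp add: Diff_eq)
  moreover have "cut_connected (edges F) (S \<inter> X)"
    using cut_connected_Int[OF S(1) f(1)[unfolded xy(1)] fS(1) xy(2,3) uniq(1)] .
  moreover have "{x, y} \<in> edges F" "x \<in> S \<inter> X" "y \<in> S - X" using f xy by auto
  ultimately show thesis using that X(1,3) xy(1) by blast
qed

lemma Union_clq_Int_split:
  assumes S: "cut_connected (edges F) S" and e: "{x, y} \<in> edges F" "x \<in> S \<inter> X" "y \<in> S - X"
    and X: "\<forall>g \<in> edges F. crosses g X \<longrightarrow> g = {x, y}"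
  shows "\<Union> (clq F ` (S \<inter> X)) \<inter> \<Union> (clq F ` (S - X)) = clq F x \<inter> clq F y"
proof
  show "\<Union> (clq F ` (S \<inter> X)) \<inter> \<Union> (clq F ` (S - X)) \<subseteq> clq F x \<inter> clq F y"
  proof
    fix w assume "w \<in> \<Union> (clq F ` (S \<inter> X)) \<inter> \<Union> (clq F ` (S - X))"
    then obtain i j where ij: "i \<in> S \<inter> X" "j \<in> S - X" "w \<in> clq F i" "w \<in> clq F j" by blast
    have "(i, j) \<in> (adj (edges F))\<^sup>*" using cut_connected_reach[OF S] ij card_edge by blast
    then obtain g where "g \<in> edges F" "crosses g X" "\<forall>u \<in> g. w \<in> clq F u"
      using running_intersection[OF ij(3,4)] ij(1,2) by blast
    then show "w \<in> clq F x \<inter> clq F y" using X by blast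
  qed
qed (use e in auto)

lemma joint_belief_singleton: "joint_belief F {i} x = bel F i (restrict x (clq F i))"
proof -
  have "e \<notin> edges F" if "e \<subseteq> {i}" for e
  proof
    assume "e \<in> edges F"
    moreover have "card e \<le> 1" using card_mono[OF _ that] by simp
    ultimately show False using card_edge by fastforce
  qed
  then have no_edges: "{e \<in> edges F. e \<subseteq> {i}} = {}" by blast
  show ?thesis unfolding joint_belief_def no_edges by simp
qed

text \<open>The joint belief factors along the bridge \<open>{x, y}\<close>, and the half beyond the bridge
  marginalizes to the separator belief.\<close>
lemma marg_joint_belief_split:
  assumes S: "S \<subseteq> nodes F" "cut_connected (edges F) S"
    and xy: "{x, y} \<in> edges F" "x \<in> S \<inter> X" "y \<in> S - X"
    and X: "\<forall>g \<in> edges F. crosses g X \<longrightarrow> g = {x, y}"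
    and IH1: "\<And>j b. j \<in> S \<inter> X \<Longrightarrow> b \<in> PiE (clq F j) D \<Longrightarrow>
        marg D (\<Union> (clq F ` (S \<inter> X))) (clq F j) (joint_belief F (S \<inter> X)) b = bel F j b"
    and IH2: "\<And>j b. j \<in> S - X \<Longrightarrow> b \<in> PiE (clq F j) D \<Longrightarrow>
        marg D (\<Union> (clq F ` (S - X))) (clq F j) (joint_belief F (S - X)) b = bel F j b"
    and i: "i \<in> S \<inter> X" and a: "a \<in> PiE (clq F i) D"
  shows "marg D (\<Union> (clq F ` S)) (clq F i) (joint_belief F S) a = bel F i a"
proof -
  define U1 where "U1 = \<Union> (clq F ` (S \<inter> X))"
  define U2 where "U2 = \<Union> (clq F ` (S - X))"
  define T where "T = sep F {x, y}"
  have fin: "finite S" using S(1) finite_nodes finite_subset by blast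
  have UT: "U1 \<inter> U2 = T"
    unfolding U1_def U2_def T_def using Union_clq_Int_split[OF S(2) xy X] sep_eq[OF xy(1)] by simp
  have "crosses {x, y} X" "{x, y} \<subseteq> S" using xy(2,3) by (auto simp: crosses_doubleton)
  from joint_belief_split[OF fin xy(1) this(2,1) X]
  have "joint_belief F S = (\<lambda>z. joint_belief F (S \<inter> X) (restrict z U1)
      * joint_belief F (S - X) (restrict z U2) / sbel F {x, y} (restrict z T))"
    unfolding U1_def U2_def T_def by (simp add: joint_belief_restrict fun_eq_iff)
  moreover have "\<Union> (clq F ` S) = U1 \<union> U2" unfolding U1_def U2_def by blast
  moreover have "marg D (U1 \<union> U2) (clq F i) (\<lambda>z. joint_belief F (S \<inter> X) (restrict z U1)
      * joint_belief F (S - X) (restrict z U2) / sbel F {x, y} (restrict z T)) a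
    = marg D U1 (clq F i) (joint_belief F (S \<inter> X)) a"
  proof (rule marg_glue[OF _ _ _ UT])
    show "finite U1" unfolding U1_def using fin S(1) finite_clq by auto
    show "clq F i \<subseteq> U1" unfolding U1_def using i by blast
    show "0 \<le> joint_belief F (S \<inter> X) z" if "z \<in> PiE U1 D" for z
      using joint_belief_nonneg[of "S \<inter> X"] S(1) that unfolding U1_def by blast
    have "clq F x \<subseteq> U1" "clq F y \<subseteq> U2" using xy(2,3) unfolding U1_def U2_def by blast+
    moreover have "{y, x} \<in> edges F" "sep F {y, x} = T" "sbel F {y, x} = sbel F {x, y}"
      using xy(1) unfolding T_def by (simp_all add: insert_commute)
    moreover note IH1[OF xy(2), folded U1_def] IH2[OF xy(3), folded U2_def]
    ultimately show "marg D U1 T (joint_belief F (S \<inter> X)) t = sbel F {x, y} t"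
      and "marg D U2 T (joint_belief F (S - X)) t = sbel F {x, y} t" if "t \<in> PiE T D" for t
      using marg_sep_if_marg_clq[OF xy(1)] marg_sep_if_marg_clq[of y x] that unfolding T_def
      by metis+
  qed (use finite_D a in auto)
  ultimately show ?thesis using IH1[OF i a] unfolding U1_def by simp
qed

theorem marg_joint_belief:
  assumes "S \<subseteq> nodes F" "cut_connected (edges F) S" "i \<in> S" "a \<in> PiE (clq F i) D"
  shows "marg D (\<Union> (clq F ` S)) (clq F i) (joint_belief F S) a = bel F i a"
  using assms
proof (induction "card S" arbitrary: S i a rule: less_induct)
  case less
  show ?case
  proof (cases "S = {i}")
    case True
    then show ?thesis using marg_self[OF less.prems(4)] PiE_restrict[OF less.prems(4)]
      by (simp add: joint_belief_singleton)
  next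
    case False
    obtain x y X where xy: "{x, y} \<in> edges F" "x \<in> S \<inter> X" "y \<in> S - X" "i \<in> X"
      and X: "\<forall>g \<in> edges F. crosses g X \<longrightarrow> g = {x, y}"
      and conn: "cut_connected (edges F) (S \<inter> X)" "cut_connected (edges F) (S - X)"
      using cut_connected_split[OF less.prems(2,3) False] by blast
    have fin: "finite S" using less.prems(1) finite_nodes finite_subset by blast
    have "card (S \<inter> X) < card S" "card (S - X) < card S"
      using psubset_card_mono[OF fin] xy(2,3) by blast+
    moreover have "S \<inter> X \<subseteq> nodes F" "S - X \<subseteq> nodes F" using less.prems(1) by blast+
    ultimately show ?thesis
      using marg_joint_belief_split[OF less.prems(1,2) xy(1-3) X] less.hyps conn less.prems(3,4) xy(4)
      by blast
  qed
qed

corollary marg_joint_belief_sep: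
  assumes S: "S \<subseteq> nodes F" "cut_connected (edges F) S" and e: "{i, n} \<in> edges F" "i \<in> S"
    and V: "sep F {i, n} \<subseteq> V" "V \<subseteq> \<Union> (clq F ` S)" and a: "a \<in> PiE (sep F {i, n}) D"
  shows "marg D V (sep F {i, n}) (marg D (\<Union> (clq F ` S)) V (joint_belief F S)) a = sbel F {i, n} a"
proof -
  have "marg D V (sep F {i, n}) (marg D (\<Union> (clq F ` S)) V (joint_belief F S)) a
      = marg D (\<Union> (clq F ` S)) (sep F {i, n}) (joint_belief F S) a"
    by (rule marg_marg[OF V])
  also have "\<dots> = sbel F {i, n} a"
    by (rule marg_sep_if_marg_clq[OF e(1) _ _ a]) (use e(2) marg_joint_belief[OF S e(2)] in auto)
  finally show ?thesis .
qed

text \<open>Otherwise let \<open>A\<close> be reachable from \<open>a\<close> along edges of \<open>T\<close> carrying \<open>w\<close>, and \<open>B\<close> the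
  component of \<open>b\<close> in \<open>T - A\<close>. An edge \<open>{u, v}\<close> of \<open>T\<close> leaving \<open>B\<close> ends in \<open>A\<close> but does not
  carry \<open>w\<close>; its bridge cut separates \<open>A\<close> from \<open>b\<close>, against the running intersection property.\<close>
lemma running_intersection_within:
  assumes T: "cut_connected (edges F) T" "a \<in> T" "b \<in> T"
    and w: "w \<in> clq F a" "w \<in> clq F b" and X: "a \<in> X" "b \<notin> X"
  shows "\<exists>e \<in> edges F. e \<subseteq> T \<and> crosses e X \<and> (\<forall>u \<in> e. w \<in> clq F u)"
proof (rule ccontr)
  assume none: "\<not> ?thesis"
  define Ew where "Ew = {e \<in> edges F. e \<subseteq> T \<and> (\<forall>u \<in> e. w \<in> clq F u)}"
  define A where "A = {x. (a, x) \<in> (adj Ew)\<^sup>*}"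
  have "b \<notin> A"
    using reach_crosses[of a b Ew X] X none unfolding A_def Ew_def by blast
  have AT: "A \<subseteq> T" using reach_closed[of a _ Ew T] T(2) unfolding A_def Ew_def by blast
  define ET where "ET = {e \<in> edges F. e \<subseteq> T - A}"
  define B where "B = {x. (b, x) \<in> (adj ET)\<^sup>*}"
  have BTA: "B \<subseteq> T - A"
    using reach_closed[of b _ ET "T - A"] T(3) \<open>b \<notin> A\<close> unfolding B_def ET_def by blast
  have "b \<in> B \<inter> T" "a \<in> T - B" using T(2,3) BTA unfolding A_def B_def by auto
  then obtain f where f: "f \<in> edges F" "f \<subseteq> T" "crosses f B"
    using T(1) unfolding cut_connected_def by blast
  then obtain u v where uv: "f = {u, v}" "u \<in> B" "v \<notin> B"
    using crosses_card_2E card_edge by metis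
  have "v \<in> A"
  proof (rule ccontr)
    assume "v \<notin> A"
    then have "f \<in> ET" using f uv BTA unfolding ET_def by blast
    then show False using uv unfolding B_def adj_def by (blast intro: rtrancl_into_rtrancl)
  qed
  have "f \<notin> Ew"
  proof
    assume "f \<in> Ew"
    then have "(v, u) \<in> adj Ew" using uv(1) unfolding adj_def by (simp add: insert_commute)
    then have "u \<in> A" using \<open>v \<in> A\<close> unfolding A_def by (blast intro: rtrancl_into_rtrancl)
    then show False using uv(2) BTA by blast
  qed
  have "{v, u} \<in> edges F" "f = {v, u}" using f(1) uv(1) by (simp_all add: insert_commute)
  with bridge_cut obtain Y where Y: "v \<in> Y" "u \<notin> Y" "\<forall>g \<in> edges F. crosses g Y \<longrightarrow> g = f"
    by blast
  have "(a, v) \<in> (adj Ew)\<^sup>*" using \<open>v \<in> A\<close> unfolding A_def by simp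
  moreover have "\<forall>e \<in> Ew. \<not> crosses e Y" using Y(3) \<open>f \<notin> Ew\<close> unfolding Ew_def by blast
  ultimately have "a \<in> Y" using reach_same_side Y(1) by metis
  have "b \<in> Y"
  proof (rule ccontr)
    assume "b \<notin> Y"
    moreover have "(a, b) \<in> (adj (edges F))\<^sup>*" using cut_connected_reach[OF T] card_edge by blast
    ultimately obtain g where "g \<in> edges F" "crosses g Y" "\<forall>u \<in> g. w \<in> clq F u"
      using running_intersection[OF w \<open>a \<in> Y\<close>] by blast
    then show False using Y(3) f(1,2) \<open>f \<notin> Ew\<close> unfolding Ew_def by blast
  qed
  have "f \<notin> ET" using \<open>v \<in> A\<close> uv(1) unfolding ET_def by blast
  then have "\<forall>e \<in> ET. \<not> crosses e Y" using Y(3) unfolding ET_def by blast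
  moreover have "(b, u) \<in> (adj ET)\<^sup>*" using uv(2) unfolding B_def by simp
  ultimately have "b \<in> Y \<longleftrightarrow> u \<in> Y" using reach_same_side by metis
  then show False using \<open>b \<in> Y\<close> Y(2) by blast
qed

lemma Union_clq_Int_boundary:
  assumes S: "cut_connected (edges F) S" and e: "{i, n} \<in> edges F" "i \<in> S" "n \<notin> S"
  shows "\<Union> (clq F ` S) \<inter> clq F n \<subseteq> clq F i"
proof
  fix w assume "w \<in> \<Union> (clq F ` S) \<inter> clq F n"
  then obtain j where j: "j \<in> S" "w \<in> clq F j" "w \<in> clq F n" by blast
  obtain Y where Y: "i \<in> Y" "n \<notin> Y" "\<forall>g \<in> edges F. crosses g Y \<longrightarrow> g = {i, n}"
    using bridge_cut[OF e(1)] by blast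
  have "S \<subseteq> Y \<or> S \<inter> Y = {}" using cut_connected_side[OF S] Y(3) e(3) by blast
  then have "j \<in> Y" using j(1) Y(1) e(2) by blast
  have "(j, i) \<in> (adj (edges F))\<^sup>*" using cut_connected_reach[OF S j(1) e(2)] card_edge by blast
  then have "(j, n) \<in> (adj (edges F))\<^sup>*" using edge_reach[OF e(1)] by (rule rtrancl_trans)
  from running_intersection[OF j(2,3) \<open>j \<in> Y\<close> Y(2) this]
  obtain g where "g \<in> edges F" "crosses g Y" "\<forall>u \<in> g. w \<in> clq F u" by blast
  then have "\<forall>u \<in> {i, n}. w \<in> clq F u" using Y(3) by blast
  then show "w \<in> clq F i" by simp
qed

end

lemma ctf_wfD:
  assumes "ctf_wf D F"
  shows "finite (nodes F)" "e \<in> edges F \<Longrightarrow> card e = 2" "e \<in> edges F \<Longrightarrow> e \<subseteq> nodes F"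
    "K \<in> trees F \<Longrightarrow> card {e \<in> edges F. e \<subseteq> K} = card K - 1"
    "i \<in> nodes F \<Longrightarrow> finite (clq F i)"
    "i \<in> nodes F \<Longrightarrow> a \<in> PiE (clq F i) D \<Longrightarrow> 0 \<le> bel F i a"
    "e \<in> edges F \<Longrightarrow> a \<in> PiE (sep F e) D \<Longrightarrow> 0 \<le> sbel F e a"
  using assms unfolding ctf_wf_def by blast+

text \<open>Otherwise the tree of \<open>a\<close> would stay connected after removing \<open>{a, b}\<close>, with fewer edges
  than the edge count allows.\<close>
lemma ctf_wf_edge_disconnects:
  assumes wf: "ctf_wf D F" and e: "{a, b} \<in> edges F" "a \<noteq> b"
  shows "(a, b) \<notin> (adj (edges F - {{a, b}}))\<^sup>*"
proof
  assume ab: "(a, b) \<in> (adj (edges F - {{a, b}}))\<^sup>*"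
  let ?E = "edges F - {{a, b}}"
  define K where "K = {x. (a, x) \<in> (adj (edges F))\<^sup>*}"
  have EN: "\<forall>f \<in> edges F. f \<subseteq> nodes F" using ctf_wfD(3)[OF wf] by blast
  then have "a \<in> nodes F" using e(1) by blast
  then have K: "K \<in> trees F" unfolding K_def by (rule component_in_trees)
  have "a \<in> K" "b \<in> K" using edge_reach[OF e(1)] unfolding K_def by simp_all
  have closed: "z \<in> K" if "{y, z} \<in> ?E" "y \<in> K" for y z
  proof -
    have "(y, z) \<in> adj (edges F)" using that(1) unfolding adj_def by simp
    with that(2) show ?thesis unfolding K_def by (simp add: rtrancl_into_rtrancl)
  qed
  have reach: "\<forall>x \<in> K. (a, x) \<in> (adj {f \<in> ?E. f \<subseteq> K})\<^sup>*"
  proof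
    fix x assume "x \<in> K"
    then have "(a, x) \<in> (adj ?E)\<^sup>*" using reach_avoiding_edge[OF _ ab] unfolding K_def by simp
    from reach_within[OF this \<open>a \<in> K\<close> closed] show "(a, x) \<in> (adj {f \<in> ?E. f \<subseteq> K})\<^sup>*" ..
  qed
  have "K \<subseteq> nodes F" unfolding K_def using reach_closed[OF _ EN \<open>a \<in> nodes F\<close>] by blast
  then have fin: "finite K" using ctf_wfD(1)[OF wf] finite_subset by blast
  let ?EK = "{f \<in> edges F. f \<subseteq> K}"
  have "card ?EK = card K - 1" using ctf_wfD(4)[OF wf K] .
  moreover have "finite ?EK" using fin by (auto intro: finite_subset[of _ "Pow K"])
  moreover have "{a, b} \<in> ?EK" using e(1) \<open>a \<in> K\<close> \<open>b \<in> K\<close> by blast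
  moreover have "{f \<in> ?E. f \<subseteq> K} = ?EK - {{a, b}}" by blast
  moreover have "card K \<le> Suc (card {f \<in> ?E. f \<subseteq> K})"
    using card_le_Suc_card_edges[OF fin _ \<open>a \<in> K\<close> reach] by blast
  moreover have "card {a, b} \<le> card K" using \<open>a \<in> K\<close> \<open>b \<in> K\<close> fin by (intro card_mono) auto
  ultimately show False using e(2) by simp
qed

lemma edge_is_bridge_if_ctf_wf:
  assumes wf: "ctf_wf D F" and e: "e \<in> edges F"
  shows "\<exists>X. crosses e X \<and> (\<forall>f \<in> edges F. crosses f X \<longrightarrow> f = e)"
proof -
  obtain a b where ab: "e = {a, b}" "a \<noteq> b" using ctf_wfD(2)[OF wf e] by (meson card_2_iff)
  define X where "X = {x. (a, x) \<in> (adj (edges F - {e}))\<^sup>*}"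
  have "crosses e X"
    using ctf_wf_edge_disconnects[OF wf e[unfolded ab(1)] ab(2)] ab(1)
    unfolding X_def by (simp add: crosses_doubleton)
  moreover have "f = e" if f: "f \<in> edges F" "crosses f X" for f
  proof (rule ccontr)
    assume "f \<noteq> e"
    obtain p q where "f = {p, q}" "p \<in> X" "q \<notin> X"
      using crosses_card_2E[OF f(2) ctf_wfD(2)[OF wf f(1)]] by blast
    then show False
      using \<open>f \<noteq> e\<close> f(1) unfolding X_def adj_def by (blast intro: rtrancl_into_rtrancl)
  qed
  ultimately show ?thesis by blast
qed

lemma junction_forest_if_valid_calibrated:
  assumes fin: "\<forall>v. finite (D v)" and wf: "ctf_wf D F"
    and vc: "\<forall>K \<in> trees F. valid_tree F K \<and> calibrated D F K"
  shows "junction_forest D F"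
proof -
  have tree: "\<exists>K \<in> trees F. x \<in> K" if "{x, y} \<in> edges F" for x y
  proof -
    have "x \<in> nodes F" using ctf_wfD(3)[OF wf that] by blast
    then have "{z. (x, z) \<in> (adj (edges F))\<^sup>*} \<in> trees F" by (rule component_in_trees)
    then show ?thesis by (rule bexI[rotated]) simp
  qed
  show ?thesis
  proof
    show "sep F {x, y} = clq F x \<inter> clq F y" if xy: "{x, y} \<in> edges F" for x y
    proof -
      obtain K where "K \<in> trees F" "x \<in> K" using tree[OF xy] by blast
      then have "valid_tree F K" using vc by blast
      then show ?thesis using xy \<open>x \<in> K\<close> unfolding valid_tree_def by blast
    qed
    show "marg D (clq F x) (sep F {x, y}) (bel F x) a = sbel F {x, y} a"
      if xy: "{x, y} \<in> edges F" "a \<in> PiE (sep F {x, y}) D" for x y a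
    proof -
      obtain K where "K \<in> trees F" "x \<in> K" using tree[OF xy(1)] by blast
      then have "calibrated D F K" using vc by blast
      then show ?thesis using xy \<open>x \<in> K\<close> unfolding calibrated_def by blast
    qed
    show "\<exists>e \<in> edges F. crosses e X \<and> (\<forall>u \<in> e. w \<in> clq F u)"
      if w: "w \<in> clq F i" "w \<in> clq F j" and X: "i \<in> X" "j \<notin> X"
        and ij: "(i, j) \<in> (adj (edges F))\<^sup>*" for w i j X
    proof -
      have "\<forall>e \<in> edges F. e \<subseteq> nodes F" using ctf_wfD(3)[OF wf] by blast
      then have "i \<in> nodes F" using reach_start[OF ij] X by blast
      define K where "K = {x. (i, x) \<in> (adj (edges F))\<^sup>*}"
      have K: "K \<in> trees F" unfolding K_def by (rule component_in_trees) fact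
      let ?W = "{u \<in> K. w \<in> clq F u}"
      have "i \<in> ?W" "j \<in> ?W" using w ij unfolding K_def by simp_all
      then have "connected_in (edges F) ?W" using vc K unfolding valid_tree_def by blast
      then have "(i, j) \<in> (adj {e \<in> edges F. e \<subseteq> ?W})\<^sup>*"
        using \<open>i \<in> ?W\<close> \<open>j \<in> ?W\<close> unfolding connected_in_def by blast
      from reach_crosses[OF this X] show ?thesis by blast
    qed
  qed (use fin ctf_wfD[OF wf] edge_is_bridge_if_ctf_wf[OF wf] in auto)
qed

section \<open>The operations\<close>

context junction_forest
begin

lemma junction_forest_induced:
  assumes N: "N \<subseteq> nodes F"
  shows "junction_forest D (F\<lparr>nodes := N, edges := {e \<in> edges F. e \<subseteq> N}\<rparr>)"
    (is "junction_forest D ?F")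
proof
  let ?E = "{e \<in> edges F. e \<subseteq> N}"
  show "\<exists>e \<in> edges ?F. crosses e X \<and> (\<forall>u \<in> e. w \<in> clq ?F u)"
    if w: "w \<in> clq ?F i" "w \<in> clq ?F j" and X: "i \<in> X" "j \<notin> X"
      and ij: "(i, j) \<in> (adj (edges ?F))\<^sup>*" for w i j X
  proof -
    define T where "T = {x. (i, x) \<in> (adj ?E)\<^sup>*}"
    have "cut_connected (edges F) T"
      unfolding T_def by (rule cut_connected_mono[OF cut_connected_component]) blast
    moreover have "i \<in> T" "j \<in> T" using ij unfolding T_def by simp_all
    moreover have "w \<in> clq F i" "w \<in> clq F j" using w by simp_all
    ultimately obtain e where e: "e \<in> edges F" "e \<subseteq> T" "crosses e X" "\<forall>u \<in> e. w \<in> clq F u"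
      using running_intersection_within X by blast
    have EN: "\<forall>e \<in> ?E. e \<subseteq> N" by blast
    have "i \<noteq> j" using X by blast
    then have "i \<in> N" using reach_start[OF _ _ EN] ij by simp
    then have "T \<subseteq> N" unfolding T_def using reach_closed[OF _ EN] by blast
    then have "e \<in> edges ?F" using e(1,2) by simp
    then show ?thesis using e(3,4) by auto
  qed
  show "\<exists>X. crosses e X \<and> (\<forall>f \<in> edges ?F. crosses f X \<longrightarrow> f = e)" if "e \<in> edges ?F" for e
    using edge_is_bridge[of e] that by auto
  show "finite (nodes ?F)" using N finite_nodes by (simp add: finite_subset)
qed (use N finite_D card_edge finite_clq bel_nonneg sbel_nonneg sep_eq marg_clq_sep in auto)

lemma junction_forest_restrict:
  assumes "op_restrict F F'"
  shows "junction_forest D F'"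
  using assms junction_forest_induced unfolding op_restrict_def by auto

lemma marg_clq_sep_subsets:
  assumes xy: "{x, y} \<in> edges F" and sub: "S' \<subseteq> C'" "C' \<subseteq> clq F x" "S' \<subseteq> sep F {x, y}"
    and t: "t \<in> PiE S' D"
  shows "marg D C' S' (marg D (clq F x) C' (bel F x)) t = marg D (sep F {x, y}) S' (sbel F {x, y}) t"
proof -
  have "marg D C' S' (marg D (clq F x) C' (bel F x)) t = marg D (clq F x) S' (bel F x) t"
    using marg_marg[OF sub(1,2)] .
  also have "\<dots> = marg D (sep F {x, y}) S' (marg D (clq F x) (sep F {x, y}) (bel F x)) t"
    by (rule marg_marg[OF sub(3) sep_subset_clq[OF xy], symmetric])
  also have "\<dots> = marg D (sep F {x, y}) S' (sbel F {x, y}) t"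
    using marg_cong[OF t sub(3)] marg_clq_sep[OF xy] by blast
  finally show ?thesis .
qed

end

locale local_marginalization = junction_forest D F
  for D :: "'v \<Rightarrow> 's set" and F :: "('n, 'v, 's) ctf" +
  fixes K :: "'n set" and v :: 'v and R :: "'n set" and F' :: "('n, 'v, 's) ctf"
  assumes K: "K \<in> trees F"
    and R: "R \<subseteq> {i \<in> K. v \<in> clq F i}" "connected_in (edges F) R"
    and nodes': "nodes F' = nodes F" and edges': "edges F' = edges F"
    and clq': "i \<in> nodes F \<Longrightarrow> if i \<in> {i \<in> K. v \<in> clq F i} - R
        then clq F' i = clq F i - {v} \<and> bel F' i = marg D (clq F i) (clq F i - {v}) (bel F i)
        else clq F' i = clq F i \<and> bel F' i = bel F i"
    and sep': "e \<in> edges F \<Longrightarrow> if e \<in> {e \<in> edges F. e \<subseteq> K \<and> v \<in> sep F e \<and> \<not> e \<subseteq> R}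
        then sep F' e = sep F e - {v} \<and> sbel F' e = marg D (sep F e) (sep F e - {v}) (sbel F e)
        else sep F' e = sep F e \<and> sbel F' e = sbel F e"
begin

lemma clq'_eq: "i \<in> nodes F \<Longrightarrow> clq F' i = (if i \<in> K \<and> i \<notin> R then clq F i - {v} else clq F i)"
  using clq'[of i] by (auto split: if_splits)

lemma sep'_eq: "e \<in> edges F \<Longrightarrow> sep F' e = (if e \<subseteq> K \<and> \<not> e \<subseteq> R then sep F e - {v} else sep F e)"
  using sep'[of e] by (auto split: if_splits)

lemma bel'_eq:
  assumes "i \<in> nodes F" "a \<in> PiE (clq F' i) D"
  shows "bel F' i a = marg D (clq F i) (clq F' i) (bel F i) a"
  using clq'[OF assms(1)] marg_self[OF assms(2)] by (auto split: if_splits)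

lemma sbel'_eq:
  assumes "e \<in> edges F" "a \<in> PiE (sep F' e) D"
  shows "sbel F' e a = marg D (sep F e) (sep F' e) (sbel F e) a"
  using sep'[OF assms(1)] marg_self[OF assms(2)] by (auto split: if_splits)

lemma sep'_eq_clq'_Int:
  assumes xy: "{x, y} \<in> edges F"
  shows "sep F' {x, y} = clq F' x \<inter> clq F' y"
proof -
  have "x \<in> nodes F" "y \<in> nodes F" using edge_subset_nodes[OF xy] by simp_all
  moreover have "x \<in> K \<longleftrightarrow> y \<in> K" using tree_edge_iff[OF K xy] .
  ultimately show ?thesis
    using sep'_eq[OF xy] clq'_eq sep_eq[OF xy] by auto
qed

lemma clq'_subset: "i \<in> nodes F \<Longrightarrow> clq F' i \<subseteq> clq F i"
  using clq'_eq by auto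

lemma sep'_subset: "e \<in> edges F \<Longrightarrow> sep F' e \<subseteq> sep F e"
  using sep'_eq by auto

text \<open>For \<open>v\<close> itself, the cliques of \<open>F'\<close> still containing it form the connected set \<open>R\<close>
  inside \<open>K\<close> and are untouched in the other trees; for the other variables nothing changes.\<close>
lemma running_intersection':
  assumes w: "w \<in> clq F' a" "w \<in> clq F' b" and X: "a \<in> X" "b \<notin> X"
    and ab: "(a, b) \<in> (adj (edges F))\<^sup>*"
  shows "\<exists>e \<in> edges F. crosses e X \<and> (\<forall>u \<in> e. w \<in> clq F' u)"
proof -
  have EN: "\<forall>e \<in> edges F. e \<subseteq> nodes F" using edge_subset_nodes by blast
  have "a \<noteq> b" using X by blast
  then have a: "a \<in> nodes F" using reach_start[OF ab _ EN] by simp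
  then have b: "b \<in> nodes F" using reach_closed[OF ab EN] by simp
  have wF: "w \<in> clq F a" "w \<in> clq F b" using w clq'_subset a b by blast+
  show ?thesis
  proof (cases "w = v")
    case False
    obtain e where e: "e \<in> edges F" "crosses e X" "\<forall>u \<in> e. w \<in> clq F u"
      using running_intersection[OF wF X ab] by blast
    have "w \<in> clq F' u" if "u \<in> e" for u
    proof -
      have "u \<in> nodes F" using EN e(1) that by blast
      then show ?thesis using clq'_eq[of u] e(3) that False by simp
    qed
    then show ?thesis using e(1,2) by blast
  next
    case True
    define T where "T = (if a \<in> K then R else {x. (a, x) \<in> (adj (edges F))\<^sup>*})"
    have "cut_connected (edges F) T"
      unfolding T_def using connected_in_imp_cut_connected[OF R(2)] cut_connected_component[of "edges F" a]
      by simp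
    moreover have "a \<in> T \<and> b \<in> T"
    proof (cases "a \<in> K")
      case True
      then have "b \<in> K" using tree_reach_closed[OF K _ ab] by blast
      have "a \<in> R" "b \<in> R"
        using \<open>a \<in> K\<close> \<open>b \<in> K\<close> w \<open>w = v\<close> clq'_eq[OF a] clq'_eq[OF b] by (auto split: if_splits)
      then show ?thesis using True unfolding T_def by simp
    qed (use ab in \<open>simp add: T_def\<close>)
    ultimately obtain e where e: "e \<in> edges F" "e \<subseteq> T" "crosses e X" "\<forall>u \<in> e. w \<in> clq F u"
      using running_intersection_within[OF _ _ _ wF X] by meson
    have "clq F' u = clq F u" if "u \<in> T" "u \<in> nodes F" for u
    proof (cases "a \<in> K")
      case False
      then have "u \<notin> K"
        using that(1) tree_reach_closed[OF K _ reach_sym] unfolding T_def by auto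
      then show ?thesis using clq'_eq[OF that(2)] by simp
    qed (use that clq'_eq[OF that(2)] in \<open>simp add: T_def\<close>)
    then show ?thesis using e EN by (metis subsetD)
  qed
qed

lemma marg_clq'_sep':
  assumes e: "{x, y} \<in> edges F" and a: "a \<in> PiE (sep F' {x, y}) D"
  shows "marg D (clq F' x) (sep F' {x, y}) (bel F' x) a = sbel F' {x, y} a"
proof -
  have x: "x \<in> nodes F" using edge_in_nodes[OF e] .
  have sub: "sep F' {x, y} \<subseteq> clq F' x" "clq F' x \<subseteq> clq F x" "sep F' {x, y} \<subseteq> sep F {x, y}"
    using sep'_eq_clq'_Int[OF e] clq'_subset[OF x] sep'_subset[OF e] by auto
  have "marg D (clq F' x) (sep F' {x, y}) (bel F' x) a
      = marg D (clq F' x) (sep F' {x, y}) (marg D (clq F x) (clq F' x) (bel F x)) a"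
    using marg_cong[OF a sub(1)] bel'_eq[OF x] by blast
  also have "\<dots> = marg D (sep F {x, y}) (sep F' {x, y}) (sbel F {x, y}) a"
    using marg_clq_sep_subsets[OF e sub a] .
  also have "\<dots> = sbel F' {x, y} a" using sbel'_eq[OF e a] by simp
  finally show ?thesis .
qed

theorem junction_forest_local: "junction_forest D F'"
proof
  show "finite (nodes F')" using finite_nodes nodes' by simp
  show "i \<in> nodes F' \<Longrightarrow> finite (clq F' i)" for i
    using finite_clq clq'_subset nodes' finite_subset by metis
  show "0 \<le> bel F' i a" if "i \<in> nodes F'" "a \<in> PiE (clq F' i) D" for i a
    using that bel_nonneg[of i] bel'_eq[of i a] marg_nonneg[of a "clq F' i" D "clq F i"] clq'_subset nodes'
    by simp
  show "0 \<le> sbel F' e a" if "e \<in> edges F'" "a \<in> PiE (sep F' e) D" for e a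
    using that sbel_nonneg[of e] sbel'_eq[of e a] marg_nonneg[of a "sep F' e" D "sep F e"] sep'_subset edges'
    by simp
qed (use finite_D card_edge edge_subset_nodes edge_is_bridge nodes' edges' sep'_eq_clq'_Int
      marg_clq'_sep' running_intersection' in simp_all)

end

lemma (in junction_forest) junction_forest_op_local:
  assumes "op_local D F F'"
  shows "junction_forest D F'"
proof -
  obtain K v R where K: "K \<in> trees F" and H:
     "R \<subseteq> {i \<in> K. v \<in> clq F i} \<and> connected_in (edges F) R
        \<and> (\<forall>e \<in> {e \<in> edges F. e \<subseteq> K \<and> v \<in> sep F e \<and> \<not> e \<subseteq> R}. sep F e - {v} \<noteq> {})
        \<and> nodes F' = nodes F \<and> edges F' = edges F
        \<and> (\<forall>i \<in> nodes F. if i \<in> {i \<in> K. v \<in> clq F i} - R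
              then clq F' i = clq F i - {v} \<and> bel F' i = marg D (clq F i) (clq F i - {v}) (bel F i)
              else clq F' i = clq F i \<and> bel F' i = bel F i)
        \<and> (\<forall>e \<in> edges F. if e \<in> {e \<in> edges F. e \<subseteq> K \<and> v \<in> sep F e \<and> \<not> e \<subseteq> R}
              then sep F' e = sep F e - {v} \<and> sbel F' e = marg D (sep F e) (sep F e - {v}) (sbel F e)
              else sep F' e = sep F e \<and> sbel F' e = sbel F e)"
    using assms unfolding op_local_def Let_def by blast
  interpret local_marginalization D F K v R F'
    by unfold_locales (use K H in blast)+
  show ?thesis by (rule junction_forest_local)
qed

text \<open>Both (O2) and (O4) replace a connected set \<open>S\<close> of cliques by a single clique \<open>c\<close>, which
  lies between the boundary separators and the union of the cliques of \<open>S\<close>.\<close>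
locale contraction = junction_forest D F
  for D :: "'v \<Rightarrow> 's set" and F :: "('n, 'v, 's) ctf" +
  fixes S :: "'n set" and c :: 'n and F' :: "('n, 'v, 's) ctf"
  assumes S: "S \<subseteq> nodes F" "cut_connected (edges F) S" "S \<noteq> {}"
    and c: "c \<notin> nodes F - S"
    and nodes': "nodes F' = (nodes F - S) \<union> {c}"
    and edges': "edges F' = {e \<in> edges F. e \<inter> S = {}}
        \<union> {{c, n} | i n. {i, n} \<in> edges F \<and> i \<in> S \<and> n \<notin> S}"
    and keep: "i \<in> nodes F - S \<Longrightarrow> clq F' i = clq F i \<and> bel F' i = bel F i"
    and keep_sep: "e \<in> edges F \<Longrightarrow> e \<inter> S = {} \<Longrightarrow> sep F' e = sep F e \<and> sbel F' e = sbel F e"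
    and redirect_sep: "{i, n} \<in> edges F \<Longrightarrow> i \<in> S \<Longrightarrow> n \<notin> S \<Longrightarrow>
        sep F' {c, n} = sep F {i, n} \<and> sbel F' {c, n} = sbel F {i, n}"
    and clq_c: "clq F' c \<subseteq> \<Union> (clq F ` S)"
    and clq_c_boundary: "{i, n} \<in> edges F \<Longrightarrow> i \<in> S \<Longrightarrow> n \<notin> S \<Longrightarrow> clq F i \<inter> clq F n \<subseteq> clq F' c"
    and bel_c_nonneg: "a \<in> PiE (clq F' c) D \<Longrightarrow> 0 \<le> bel F' c a"
    and bel_c_calibrated: "{i, n} \<in> edges F \<Longrightarrow> i \<in> S \<Longrightarrow> n \<notin> S \<Longrightarrow> a \<in> PiE (sep F {i, n}) D \<Longrightarrow>
        marg D (clq F' c) (sep F {i, n}) (bel F' c) a = sbel F {i, n} a"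
begin

definition contract :: "'n \<Rightarrow> 'n" where
  "contract x = (if x \<in> S then c else x)"

lemma edge'_cases:
  assumes "e \<in> edges F'"
  obtains "e \<in> edges F" "e \<inter> S = {}"
    | i n where "e = {c, n}" "{i, n} \<in> edges F" "i \<in> S" "n \<notin> S"
  using assms unfolding edges' by blast

lemma boundary_node:
  assumes "{i, n} \<in> edges F" "n \<notin> S"
  shows "n \<in> nodes F - S" "n \<noteq> c"
  using edge_subset_nodes[OF assms(1)] assms(2) c by auto

lemma clq_c_Int:
  assumes "{i, n} \<in> edges F" "i \<in> S" "n \<notin> S"
  shows "clq F' c \<inter> clq F n = clq F i \<inter> clq F n"
  using clq_c clq_c_boundary[OF assms] Union_clq_Int_boundary[OF S(2) assms] by blast

lemma edges'_eq_image: "edges F' = (\<lambda>e. contract ` e) ` {e \<in> edges F. \<not> e \<subseteq> S}"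
proof (intro equalityI subsetI)
  fix e assume "e \<in> edges F'"
  then show "e \<in> (\<lambda>e. contract ` e) ` {e \<in> edges F. \<not> e \<subseteq> S}"
  proof (cases rule: edge'_cases)
    case 1
    moreover from 1 have "contract ` e = e" unfolding contract_def by (auto simp: image_iff)
    moreover have "e \<noteq> {}" using card_edge[OF 1(1)] by auto
    with 1(2) have "\<not> e \<subseteq> S" by blast
    ultimately show ?thesis by (metis (mono_tags, lifting) image_eqI mem_Collect_eq)
  next
    case (2 i n)
    then have "contract ` {i, n} = e" unfolding contract_def by auto
    then show ?thesis using 2 by blast
  qed
next
  fix e' assume "e' \<in> (\<lambda>e. contract ` e) ` {e \<in> edges F. \<not> e \<subseteq> S}"
  then obtain e where e: "e \<in> edges F" "\<not> e \<subseteq> S" "e' = contract ` e" by blast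
  obtain x y where xy: "e = {x, y}" using edge_doubletonE[OF e(1)] by metis
  show "e' \<in> edges F'"
  proof (cases "x \<in> S \<or> y \<in> S")
    case True
    then obtain i n where "e = {i, n}" "i \<in> S" "n \<notin> S" using e(2) xy by auto
    moreover then have "e' = {c, n}" using e(3) unfolding contract_def by auto
    ultimately show ?thesis using e(1) unfolding edges' by blast
  next
    case False
    then have "e' = e" "e \<inter> S = {}" using e(3) xy unfolding contract_def by auto
    then show ?thesis using e(1) unfolding edges' by blast
  qed
qed

lemma contract_preserves_cut:
  assumes "\<forall>x \<in> nodes F. contract x \<in> X' \<longleftrightarrow> x \<in> X" "f \<in> edges F"
  shows "crosses (contract ` f) X' \<longleftrightarrow> crosses f X"
  unfolding crosses_image using assms edge_subset_nodes[OF assms(2)] by (intro crosses_cong) auto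

text \<open>The bridge cut of an edge leaving \<open>S\<close> has \<open>S\<close> on one side, so it survives the contraction.\<close>
lemma edge'_is_bridge:
  assumes "e' \<in> edges F'"
  shows "\<exists>X'. crosses e' X' \<and> (\<forall>f' \<in> edges F'. crosses f' X' \<longrightarrow> f' = e')"
proof -
  obtain e where e: "e \<in> edges F" "\<not> e \<subseteq> S" "e' = contract ` e"
    using assms unfolding edges'_eq_image by blast
  obtain X where X: "crosses e X" "\<forall>f \<in> edges F. crosses f X \<longrightarrow> f = e"
    using edge_is_bridge[OF e(1)] by blast
  have "S \<subseteq> X \<or> S \<inter> X = {}" using cut_connected_side[OF S(2)] X(2) e(2) by blast
  define X' where "X' = {x \<in> X. x \<notin> S \<and> x \<noteq> c} \<union> (if S \<subseteq> X then {c} else {})"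
  have X': "\<forall>x \<in> nodes F. contract x \<in> X' \<longleftrightarrow> x \<in> X"
    using \<open>S \<subseteq> X \<or> S \<inter> X = {}\<close> c unfolding X'_def contract_def by auto
  have "crosses e' X'" using contract_preserves_cut[OF X' e(1)] X(1) e(3) by simp
  moreover have "f' = e'" if f': "f' \<in> edges F'" "crosses f' X'" for f'
  proof -
    obtain f where "f \<in> edges F" "f' = contract ` f" using f'(1) unfolding edges'_eq_image by blast
    then show ?thesis using contract_preserves_cut[OF X'] X(2) f'(2) e(3) by blast
  qed
  ultimately show ?thesis by blast
qed

lemma reach_lift:
  assumes ab: "(a, b) \<in> (adj (edges F'))\<^sup>*"
    and a0: "a0 \<in> nodes F" "contract a0 = a" and b0: "b0 \<in> nodes F" "contract b0 = b"
  shows "(a0, b0) \<in> (adj (edges F))\<^sup>*"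
proof -
  obtain j where j: "j \<in> S" using S(3) by blast
  define lift where "lift x = (if x = c then j else x)" for x
  have S_reach: "(x, y) \<in> (adj (edges F))\<^sup>*" if "x \<in> S" "y \<in> S" for x y
    using cut_connected_reach[OF S(2) that] card_edge by blast
  have "(lift x, lift y) \<in> (adj (edges F))\<^sup>*" if "{x, y} \<in> edges F'" for x y
    using that
  proof (cases rule: edge'_cases)
    case 1
    then have "x \<noteq> c" "y \<noteq> c" using edge_subset_nodes c by blast+
    then show ?thesis using edge_reach[OF 1(1)] unfolding lift_def by simp
  next
    case (2 i n)
    have "n \<noteq> c" using boundary_node[OF 2(2,4)] by simp
    have jn: "(j, n) \<in> (adj (edges F))\<^sup>*" using S_reach[OF j 2(3)] edge_reach[OF 2(2)] by (rule rtrancl_trans)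
    have "x = c \<and> y = n \<or> x = n \<and> y = c" using 2(1) by (auto simp: doubleton_eq_iff)
    then show ?thesis using \<open>n \<noteq> c\<close> jn reach_sym[OF jn] unfolding lift_def by auto
  qed
  then have "(lift a, lift b) \<in> (adj (edges F))\<^sup>*" by (rule reach_map[OF ab])
  moreover have to_lift: "(x0, lift (contract x0)) \<in> (adj (edges F))\<^sup>*" if "x0 \<in> nodes F" for x0
    using S_reach[OF _ j] that c unfolding lift_def contract_def by auto
  ultimately have "(a0, lift b) \<in> (adj (edges F))\<^sup>*"
    using to_lift[OF a0(1)] a0(2) by (simp add: rtrancl_trans)
  then show ?thesis using reach_sym[OF to_lift[OF b0(1)]] b0(2) by (simp add: rtrancl_trans)
qed

lemma edge'_subset_nodes: "e \<in> edges F' \<Longrightarrow> e \<subseteq> nodes F'"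
  by (cases rule: edge'_cases) (use edge_subset_nodes boundary_node nodes' in auto)

lemma clq'_contract:
  assumes "g \<in> edges F" "\<not> g \<subseteq> S" "\<forall>u \<in> g. w \<in> clq F u" "u \<in> g"
  shows "w \<in> clq F' (contract u)"
proof (cases "u \<in> S")
  case True
  obtain x y where "g = {x, y}" using edge_doubletonE[OF assms(1)] by metis
  then have "\<exists>n. g = {u, n}" using assms(4) by (auto simp: insert_commute)
  then obtain n where "g = {u, n}" by blast
  then have "{u, n} \<in> edges F" "n \<notin> S" "w \<in> clq F u \<inter> clq F n"
    using assms(1-3) True by auto
  then have "w \<in> clq F' c" using clq_c_boundary True by blast
  then show ?thesis using True unfolding contract_def by simp
next
  case False
  then have "u \<in> nodes F - S" using edge_subset_nodes[OF assms(1)] assms(4) by blast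
  then show ?thesis using keep assms(3,4) False unfolding contract_def by simp
qed

lemma clq'_preimage:
  assumes "x \<in> nodes F'" "w \<in> clq F' x"
  obtains x0 where "x0 \<in> nodes F" "contract x0 = x" "w \<in> clq F x0"
proof (cases "x = c")
  case True
  then obtain x0 where "x0 \<in> S" "w \<in> clq F x0" using assms(2) clq_c by blast
  moreover from calculation have "x0 \<in> nodes F" using S(1) by blast
  ultimately show thesis using that[of x0] True unfolding contract_def by simp
next
  case False
  then have "x \<in> nodes F - S" using assms(1) nodes' by simp
  then show thesis using that[of x] keep assms(2) unfolding contract_def by simp
qed

lemma running_intersection':
  assumes w: "w \<in> clq F' a" "w \<in> clq F' b" and X: "a \<in> X" "b \<notin> X"
    and ab: "(a, b) \<in> (adj (edges F'))\<^sup>*"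
  shows "\<exists>e \<in> edges F'. crosses e X \<and> (\<forall>u \<in> e. w \<in> clq F' u)"
proof -
  have EN: "\<forall>e \<in> edges F'. e \<subseteq> nodes F'" using edge'_subset_nodes by blast
  have "a \<noteq> b" using X by blast
  then have "a \<in> nodes F'" using reach_start[OF ab _ EN] by simp
  then have "b \<in> nodes F'" using reach_closed[OF ab EN] by simp
  obtain a0 where a0: "a0 \<in> nodes F" "contract a0 = a" "w \<in> clq F a0"
    using clq'_preimage[OF \<open>a \<in> nodes F'\<close> w(1)] .
  obtain b0 where b0: "b0 \<in> nodes F" "contract b0 = b" "w \<in> clq F b0"
    using clq'_preimage[OF \<open>b \<in> nodes F'\<close> w(2)] .
  have "a0 \<in> contract -` X" "b0 \<notin> contract -` X" using a0(2) b0(2) X by simp_all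
  then obtain g where g: "g \<in> edges F" "crosses g (contract -` X)" "\<forall>u \<in> g. w \<in> clq F u"
    using running_intersection[OF a0(3) b0(3) _ _ reach_lift[OF ab a0(1,2) b0(1,2)]] by blast
  then have cross: "crosses (contract ` g) X" by (simp add: crosses_image)
  then have "\<not> g \<subseteq> S" unfolding crosses_def contract_def by auto
  then have "contract ` g \<in> edges F'" using g(1) unfolding edges'_eq_image by blast
  moreover have "\<forall>u \<in> contract ` g. w \<in> clq F' u"
    using clq'_contract[OF g(1) \<open>\<not> g \<subseteq> S\<close> g(3)] by auto
  ultimately show ?thesis using cross by blast
qed

lemma sep'_redirected:
  assumes "{i, n} \<in> edges F" "i \<in> S" "n \<notin> S"
  shows "sep F' {c, n} = clq F' c \<inter> clq F' n"
  using redirect_sep[OF assms] sep_eq[OF assms(1)] clq_c_Int[OF assms] keep boundary_node[OF assms(1,3)]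
  by simp

lemma sep'_eq_clq'_Int:
  assumes "{x, y} \<in> edges F'"
  shows "sep F' {x, y} = clq F' x \<inter> clq F' y"
  using assms
proof (cases rule: edge'_cases)
  case 1
  have "{x, y} \<subseteq> nodes F" using edge_subset_nodes[OF 1(1)] .
  then have "x \<in> nodes F - S" "y \<in> nodes F - S" using 1(2) by auto
  then show ?thesis using keep_sep[OF 1] sep_eq[OF 1(1)] keep by simp
next
  case (2 i n)
  have "x = c \<and> y = n \<or> x = n \<and> y = c" using 2(1) by (auto simp: doubleton_eq_iff)
  then show ?thesis
  proof
    assume "x = n \<and> y = c"
    then show ?thesis using sep'_redirected[OF 2(2-4)] by (simp add: insert_commute Int_commute)
  qed (use sep'_redirected[OF 2(2-4)] in simp)
qed

lemma marg_clq'_sep':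
  assumes xy: "{x, y} \<in> edges F'" and a: "a \<in> PiE (sep F' {x, y}) D"
  shows "marg D (clq F' x) (sep F' {x, y}) (bel F' x) a = sbel F' {x, y} a"
  using xy
proof (cases rule: edge'_cases)
  case 1
  have "{x, y} \<subseteq> nodes F" using edge_subset_nodes[OF 1(1)] .
  then have "x \<in> nodes F - S" using 1(2) by auto
  then show ?thesis using keep_sep[OF 1] keep marg_clq_sep[OF 1(1)] a by simp
next
  case (2 i n)
  note sep_n = redirect_sep[OF 2(2-4)]
  have "x = c \<and> y = n \<or> x = n \<and> y = c" using 2(1) by (auto simp: doubleton_eq_iff)
  then show ?thesis
  proof
    assume "x = c \<and> y = n"
    then show ?thesis using sep_n bel_c_calibrated[OF 2(2-4)] a 2(1) by simp
  next
    assume "x = n \<and> y = c"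
    moreover have "{n, i} \<in> edges F" using 2(2) by (simp add: insert_commute)
    ultimately show ?thesis
      using sep_n keep[OF boundary_node(1)[OF 2(2,4)]] marg_clq_sep[of n i a] a 2(1)
      by (simp add: insert_commute)
  qed
qed

theorem junction_forest_contraction: "junction_forest D F'"
proof
  show "finite (nodes F')" using finite_nodes nodes' by simp
  show "card e = 2" if "e \<in> edges F'" for e
    using that
  proof (cases rule: edge'_cases)
    case (2 i n)
    then show ?thesis using boundary_node(2)[OF 2(2,4)] by simp
  qed (rule card_edge)
  show "finite (clq F' i)" if "i \<in> nodes F'" for i
  proof (cases "i = c")
    case True
    have "finite S" using S(1) finite_nodes finite_subset by blast
    then have "finite (\<Union> (clq F ` S))" using S(1) finite_clq by (intro finite_UN_I) auto
    then show ?thesis using finite_subset[OF clq_c] True by simp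
  next
    case False
    then have "i \<in> nodes F - S" using that nodes' by simp
    then show ?thesis using keep finite_clq by simp
  qed
  show "0 \<le> bel F' i a" if "i \<in> nodes F'" "a \<in> PiE (clq F' i) D" for i a
  proof (cases "i = c")
    case False
    then have "i \<in> nodes F - S" using that(1) nodes' by simp
    then show ?thesis using keep bel_nonneg that(2) by simp
  qed (use bel_c_nonneg that(2) in simp)
  show "0 \<le> sbel F' e a" if "e \<in> edges F'" "a \<in> PiE (sep F' e) D" for e a
    using that(1)
  proof (cases rule: edge'_cases)
    case 1
    then show ?thesis using keep_sep sbel_nonneg that(2) by simp
  next
    case (2 i n)
    then show ?thesis using redirect_sep sbel_nonneg that(2) by simp
  qed
qed (use finite_D edge'_subset_nodes edge'_is_bridge sep'_eq_clq'_Int marg_clq'_sep'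
      running_intersection' in auto)

end

context junction_forest
begin

lemma tree_subset_nodes: "K \<in> trees F \<Longrightarrow> K \<subseteq> nodes F"
  unfolding trees_def using reach_closed[of _ _ "edges F" "nodes F"] edge_subset_nodes by blast

lemma junction_forest_op_exact:
  assumes "op_exact D F F'"
  shows "junction_forest D F'"
proof -
  obtain K v c where K: "K \<in> trees F"
    and ST: "connected_in (edges F) {i \<in> K. v \<in> clq F i}" and c: "c \<notin> nodes F"
    and nodes': "nodes F' = (nodes F - {i \<in> K. v \<in> clq F i}) \<union> {c}"
    and edges': "edges F' = {e \<in> edges F. e \<inter> {i \<in> K. v \<in> clq F i} = {}}
        \<union> {{c, n} | i n. {i, n} \<in> edges F \<and> i \<in> {i \<in> K. v \<in> clq F i} \<and> n \<notin> {i \<in> K. v \<in> clq F i}}"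
    and keep: "\<forall>i \<in> nodes F - {i \<in> K. v \<in> clq F i}. clq F' i = clq F i \<and> bel F' i = bel F i"
    and clq_c: "clq F' c = \<Union> (clq F ` {i \<in> K. v \<in> clq F i}) - {v}"
    and bel_c: "bel F' c = marg D (\<Union> (clq F ` {i \<in> K. v \<in> clq F i})) (\<Union> (clq F ` {i \<in> K. v \<in> clq F i}) - {v})
        (joint_belief F {i \<in> K. v \<in> clq F i})"
    and keep_sep: "\<forall>e \<in> edges F. e \<inter> {i \<in> K. v \<in> clq F i} = {} \<longrightarrow> sep F' e = sep F e \<and> sbel F' e = sbel F e"
    and redirect_sep: "\<forall>i n. {i, n} \<in> edges F \<and> i \<in> {i \<in> K. v \<in> clq F i} \<and> n \<notin> {i \<in> K. v \<in> clq F i} \<longrightarrow>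
        sep F' {c, n} = sep F {i, n} \<and> sbel F' {c, n} = sbel F {i, n}"
    using assms unfolding op_exact_def Let_def joint_belief_def[abs_def]
    by (elim bexE exE conjE) (rule that[unfolded joint_belief_def[abs_def]]; assumption)
  define ST where "ST = {i \<in> K. v \<in> clq F i}"
  define U where "U = \<Union> (clq F ` ST)"
  have STN: "ST \<subseteq> nodes F" using tree_subset_nodes[OF K] unfolding ST_def by blast
  have STconn: "cut_connected (edges F) ST" using connected_in_imp_cut_connected[OF ST] unfolding ST_def .
  have v_boundary: "v \<notin> clq F n" if "{i, n} \<in> edges F" "i \<in> ST" "n \<notin> ST" for i n
    using tree_edge_iff[OF K that(1)] that(2,3) unfolding ST_def by blast
  interpret contraction D F ST c F'
  proof
    show "ST \<subseteq> nodes F" by (rule STN)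
    show "cut_connected (edges F) ST" by (rule STconn)
    show "ST \<noteq> {}" using ST unfolding ST_def connected_in_def by blast
    show "c \<notin> nodes F - ST" using c by blast
    show "nodes F' = nodes F - ST \<union> {c}" using nodes' unfolding ST_def .
    show "edges F' = {e \<in> edges F. e \<inter> ST = {}} \<union> {{c, n} | i n. {i, n} \<in> edges F \<and> i \<in> ST \<and> n \<notin> ST}"
      using edges' unfolding ST_def .
    show "clq F' i = clq F i \<and> bel F' i = bel F i" if "i \<in> nodes F - ST" for i
      using keep that unfolding ST_def by blast
    show "sep F' e = sep F e \<and> sbel F' e = sbel F e" if "e \<in> edges F" "e \<inter> ST = {}" for e
      using keep_sep that unfolding ST_def by blast
    show "sep F' {c, n} = sep F {i, n} \<and> sbel F' {c, n} = sbel F {i, n}"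
      if "{i, n} \<in> edges F" "i \<in> ST" "n \<notin> ST" for i n
      using redirect_sep that unfolding ST_def by blast
    show "clq F' c \<subseteq> \<Union> (clq F ` ST)" using clq_c unfolding ST_def by blast
    show "clq F i \<inter> clq F n \<subseteq> clq F' c" if "{i, n} \<in> edges F" "i \<in> ST" "n \<notin> ST" for i n
      using v_boundary[OF that] that(2) clq_c unfolding ST_def by blast
    show "0 \<le> bel F' c a" if "a \<in> PiE (clq F' c) D" for a
    proof -
      have "a \<in> PiE (U - {v}) D" using that clq_c unfolding ST_def U_def by simp
      then have "0 \<le> marg D U (U - {v}) (joint_belief F ST) a"
        using marg_nonneg[of a "U - {v}" D U] joint_belief_nonneg[OF STN] unfolding U_def by blast
      then show ?thesis using bel_c unfolding ST_def U_def by simp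
    qed
    show "marg D (clq F' c) (sep F {i, n}) (bel F' c) a = sbel F {i, n} a"
      if e: "{i, n} \<in> edges F" "i \<in> ST" "n \<notin> ST" and a: "a \<in> PiE (sep F {i, n}) D" for i n a
    proof -
      have "sep F {i, n} \<subseteq> U - {v}" "U - {v} \<subseteq> U"
        using sep_eq[OF e(1)] v_boundary[OF e] e(2) unfolding U_def by blast+
      from marg_joint_belief_sep[OF STN STconn e(1,2) this[unfolded U_def] a]
      show ?thesis unfolding clq_c bel_c ST_def[symmetric] .
    qed
  qed
  show ?thesis by (rule junction_forest_contraction)
qed

lemma edges_remove_eq:
  assumes "{C, C'} \<in> edges F"
  shows "{e \<in> edges F. C \<notin> e} \<union> {{n, C'} | n. {n, C} \<in> edges F \<and> n \<noteq> C'}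
       = {e \<in> edges F. e \<inter> {C, C'} = {}} \<union> {{C', n} | i n. {i, n} \<in> edges F \<and> i \<in> {C, C'} \<and> n \<notin> {C, C'}}"
proof (intro equalityI subsetI)
  fix e assume "e \<in> {e \<in> edges F. C \<notin> e} \<union> {{n, C'} | n. {n, C} \<in> edges F \<and> n \<noteq> C'}"
  then consider "e \<in> edges F" "C \<notin> e" | n where "e = {n, C'}" "{n, C} \<in> edges F" "n \<noteq> C'" by blast
  then show "e \<in> {e \<in> edges F. e \<inter> {C, C'} = {}} \<union> {{C', n} | i n. {i, n} \<in> edges F \<and> i \<in> {C, C'} \<and> n \<notin> {C, C'}}"
  proof cases
    case 1
    show ?thesis
    proof (cases "C' \<in> e")
      case True
      obtain x y where "e = {x, y}" "x \<noteq> y" using edge_doubletonE[OF 1(1)] by metis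
      with True obtain n where "e = {C', n}" "n \<noteq> C'" by (metis insert_commute insertE singletonD)
      moreover from calculation have "n \<noteq> C" using 1(2) by blast
      ultimately show ?thesis using 1(1) by blast
    qed (use 1 in blast)
  next
    case (2 n)
    then have "n \<noteq> C" "{C, n} \<in> edges F" using edge_neq by (auto simp: insert_commute)
    then show ?thesis using 2 by (auto simp: insert_commute)
  qed
next
  fix e assume "e \<in> {e \<in> edges F. e \<inter> {C, C'} = {}} \<union> {{C', n} | i n. {i, n} \<in> edges F \<and> i \<in> {C, C'} \<and> n \<notin> {C, C'}}"
  then consider "e \<in> edges F" "e \<inter> {C, C'} = {}" | i n where "e = {C', n}" "{i, n} \<in> edges F" "i \<in> {C, C'}" "n \<notin> {C, C'}"
    by blast
  then show "e \<in> {e \<in> edges F. C \<notin> e} \<union> {{n, C'} | n. {n, C} \<in> edges F \<and> n \<noteq> C'}"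
  proof cases
    case (2 i n)
    show ?thesis
    proof (cases "i = C")
      case True
      then have "{n, C} \<in> edges F" using 2(2) by (simp add: insert_commute)
      then show ?thesis using 2(1,4) by (auto simp: insert_commute)
    qed (use 2 in auto)
  qed blast
qed

lemma marg_clq_non_maximal:
  assumes e: "{C, C'} \<in> edges F" and sub: "clq F C \<subseteq> clq F C'" and b: "b \<in> PiE (clq F C) D"
  shows "marg D (clq F C') (clq F C) (bel F C') b = bel F C b"
proof -
  have e': "{C', C} \<in> edges F" using e by (simp add: insert_commute)
  have sep: "sep F {C, C'} = clq F C" "sep F {C', C} = clq F C"
    using sep_eq[OF e] sep_eq[OF e'] sub by auto
  have "bel F C b = marg D (clq F C) (clq F C) (bel F C) b" by (rule marg_self[symmetric, OF b])
  also have "\<dots> = sbel F {C, C'} b" using marg_clq_sep[OF e] sep(1) b by simp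
  also have "\<dots> = marg D (clq F C') (clq F C) (bel F C') b"
    using marg_clq_sep[OF e'] sep(2) b by (simp add: insert_commute)
  finally show ?thesis by simp
qed

lemma sep_non_maximal_boundary:
  assumes e: "{C, C'} \<in> edges F" and sub: "clq F C \<subseteq> clq F C'"
    and n: "{C, n} \<in> edges F" "n \<notin> {C, C'}"
  shows "clq F n \<inter> clq F C' = sep F {C, n}"
proof -
  have "clq F n \<inter> clq F C' \<subseteq> clq F C"
    using Union_clq_Int_boundary[OF cut_connected_edge[OF e] n(1) _ n(2)] by auto
  then show ?thesis using sep_eq[OF n(1)] sub by auto
qed

lemma junction_forest_op_remove:
  assumes "op_remove F F'"
  shows "junction_forest D F'"
proof -
  obtain C C' where CC': "{C, C'} \<in> edges F" "C \<noteq> C'" "clq F C \<subseteq> clq F C'"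
    and nodes': "nodes F' = nodes F - {C}"
    and edges': "edges F' = {e \<in> edges F. C \<notin> e} \<union> {{n, C'} | n. {n, C} \<in> edges F \<and> n \<noteq> C'}"
    and keep: "\<forall>i \<in> nodes F - {C}. clq F' i = clq F i \<and> bel F' i = bel F i"
    and keep_sep: "\<forall>e \<in> edges F. C \<notin> e \<longrightarrow> sep F' e = sep F e \<and> sbel F' e = sbel F e"
    and redirect: "\<forall>n. {n, C} \<in> edges F \<and> n \<noteq> C' \<longrightarrow>
        sep F' {n, C'} = clq F n \<inter> clq F C' \<and> sbel F' {n, C'} = sbel F {n, C}"
    using assms unfolding op_remove_def by (elim exE conjE) (rule that; assumption)
  have C'N: "C' \<in> nodes F - {C}" using edge_subset_nodes[OF CC'(1)] CC'(2) by blast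
  interpret contraction D F "{C, C'}" C' F'
  proof
    show "{C, C'} \<subseteq> nodes F" using edge_subset_nodes[OF CC'(1)] .
    show "cut_connected (edges F) {C, C'}" using cut_connected_edge[OF CC'(1)] .
    show "{C, C'} \<noteq> {}" "C' \<notin> nodes F - {C, C'}" by blast+
    show "nodes F' = nodes F - {C, C'} \<union> {C'}" using nodes' C'N by blast
    show "edges F' = {e \<in> edges F. e \<inter> {C, C'} = {}}
        \<union> {{C', n} | i n. {i, n} \<in> edges F \<and> i \<in> {C, C'} \<and> n \<notin> {C, C'}}"
      using edges' edges_remove_eq[OF CC'(1)] by simp
    show "clq F' i = clq F i \<and> bel F' i = bel F i" if "i \<in> nodes F - {C, C'}" for i
      using keep that by blast
    show "sep F' e = sep F e \<and> sbel F' e = sbel F e" if "e \<in> edges F" "e \<inter> {C, C'} = {}" for e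
      using keep_sep that by blast
    show "sep F' {C', n} = sep F {i, n} \<and> sbel F' {C', n} = sbel F {i, n}"
      if e: "{i, n} \<in> edges F" "i \<in> {C, C'}" "n \<notin> {C, C'}" for i n
    proof (cases "i = C")
      case True
      have "clq F n \<inter> clq F C' = sep F {i, n}"
        using sep_non_maximal_boundary[OF CC'(1,3)] e True by simp
      moreover have "{n, C} \<in> edges F" using e(1) True by (simp add: insert_commute)
      then have "sep F' {n, C'} = clq F n \<inter> clq F C' \<and> sbel F' {n, C'} = sbel F {n, C}"
        using redirect e(3) by blast
      ultimately show ?thesis using True by (simp add: insert_commute)
    next
      case False
      then have "C \<notin> {i, n}" using e(2,3) CC'(2) by auto
      then show ?thesis using keep_sep e(1) False e(2) by auto
    qed
    show "clq F' C' \<subseteq> \<Union> (clq F ` {C, C'})" using keep C'N by simp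
    show "clq F i \<inter> clq F n \<subseteq> clq F' C'" if "{i, n} \<in> edges F" "i \<in> {C, C'}" "n \<notin> {C, C'}" for i n
      using that keep C'N CC'(3) by auto
    show "0 \<le> bel F' C' a" if "a \<in> PiE (clq F' C') D" for a
      using bel_nonneg keep C'N that by simp
    show "marg D (clq F' C') (sep F {i, n}) (bel F' C') a = sbel F {i, n} a"
      if e: "{i, n} \<in> edges F" "i \<in> {C, C'}" "n \<notin> {C, C'}" and a: "a \<in> PiE (sep F {i, n}) D" for i n a
    proof (cases "i = C")
      case True
      then have "{C, n} \<in> edges F" "a \<in> PiE (sep F {C, n}) D" using e(1) a by simp_all
      from marg_sep_if_marg_clq[OF this(1) CC'(3) marg_clq_non_maximal[OF CC'(1,3)] this(2)]
      show ?thesis using True keep C'N by simp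
    next
      case False
      then show ?thesis using marg_clq_sep[OF e(1) a] e(2) keep C'N by simp
    qed
  qed
  show ?thesis by (rule junction_forest_contraction)
qed

end

lemma junction_forest_ctf_step:
  assumes "junction_forest D F" "ctf_step D F F'"
  shows "junction_forest D F'"
  using assms(2) unfolding ctf_step_def
  using junction_forest.junction_forest_restrict[OF assms(1)] junction_forest.junction_forest_op_exact[OF assms(1)]
    junction_forest.junction_forest_op_local[OF assms(1)] junction_forest.junction_forest_op_remove[OF assms(1)]
  by blast

theorem proposition2:
  fixes D :: "'v \<Rightarrow> 's set" and F F' :: "('n, 'v, 's) ctf"
  assumes "\<forall>v. finite (D v)"
    and "ctf_wf D F"
    and "\<forall>K \<in> trees F. valid_tree F K \<and> calibrated D F K"
    and "(ctf_step D)\<^sup>*\<^sup>* F F'"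
  shows "\<forall>K \<in> trees F'. calibrated D F' K"
proof -
  have "junction_forest D F" using junction_forest_if_valid_calibrated assms(1-3) .
  with assms(4) have "junction_forest D F'"
    by (induction rule: rtranclp_induct) (auto intro: junction_forest_ctf_step)
  then show ?thesis using junction_forest.calibrated by blast
qed

end
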